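(* Let $A\in\mathbb{R}^{m\times n}$ be semi-monotone, let $A=P_1-R_1+S_1$ be a double proper weak regular splitting and $A=P_2-R_2+S_2$ a double proper regular splitting of $A$. Suppose $N(S_2)=N(P_2)$, $R(S_2)=R(P_2)$, $1\notin\sigma(S_2P_1^{\dagger})$, $-1\notin\sigma(R_2P_1^{\dagger})$, $\widehat{A}^{\dagger}\geq 0$ and $\widehat{\mathcal{A}}^{\dagger}\geq 0$, where $\widehat{A}=(I-S_2P_1^{\dagger})A$ and $\widehat{\mathcal{A}}=(I+R_2P_1^{\dagger})A$. Let $\widehat{P}=\widehat{\mathcal{P}}=P_2$, $\widehat{R}=R_2-S_2P_1^{\dagger}R_1$ and $\widehat{\mathcal{R}}=R_2P_1^{\dagger}R_1-S_2$. If $\widehat{\mathcal{P}}^{\dagger}\widehat{\mathcal{R}}\geq\widehat{P}^{\dagger}\widehat{R}$ and $\widehat{\mathcal{P}}^{\dagger}\widehat{\mathcal{A}}\geq\widehat{P}^{\dagger}\widehat{A}$, then $\rho(\mathcal{W}_{12})\leq\rho(W_{12})<1$, where $$W_{12}=\begin{pmatrix} P_2^{\dagger}R_2-P_2^{\dagger}S_2P_1^{\dagger}R_1 & P_2^{\dagger}S_2P_1^{\dagger}S_1\\ I & 0\end{pmatrix},\qquad \mathcal{W}_{12}=\begin{pmatrix} P_2^{\dagger}R_2P_1^{\dagger}R_1-P_2^{\dagger}S_2 & -P_2^{\dagger}R_2P_1^{\dagger}S_1\\ I & 0\end{pmatrix}.$$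
   Context: For $M\in\mathbb{R}^{m\times n}$, $M^{\dagger}$ is its Moore–Penrose inverse, $R(M)$, $N(M)$ its range and null space; inequalities are entrywise; $\rho$ is the spectral radius, $\sigma$ the spectrum. $A$ is semi-monotone if $A^{\dagger}\geq0$. A double splitting $A=P-R+S$ is a double proper splitting if $R(P)=R(A)$ and $N(P)=N(A)$; it is double proper regular if moreover $P^{\dagger}\geq0$, $R\geq0$, $S\leq0$; double proper weak regular if moreover $P^{\dagger}\geq 0$, $P^{\dagger}R\geq 0$, $P^{\dagger}S\leq 0$. *)

theory Defs
  imports "Jordan_Normal_Form.Spectral_Radius" "Jordan_Normal_Form.Matrix_Kernel"
begin

definition is_mp_inverse :: "real mat \<Rightarrow> real mat \<Rightarrow> bool" where
  "is_mp_inverse M X \<longleftrightarrow> X \<in> carrier_mat (dim_col M) (dim_row M) \<and>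
     M * X * M = M \<and> X * M * X = X \<and>
     transpose_mat (M * X) = M * X \<and> transpose_mat (X * M) = X * M"

definition mp_inv :: "real mat \<Rightarrow> real mat" where
  "mp_inv M = (THE X. is_mp_inverse M X)"

definition mat_range :: "real mat \<Rightarrow> real vec set" where
  "mat_range M = {M *\<^sub>v x | x. x \<in> carrier_vec (dim_col M)}"

definition mat_nonneg :: "real mat \<Rightarrow> bool" where
  "mat_nonneg M \<longleftrightarrow> (\<forall>i < dim_row M. \<forall>j < dim_col M. M $$ (i,j) \<ge> 0)"

definition mat_nonpos :: "real mat \<Rightarrow> bool" where
  "mat_nonpos M \<longleftrightarrow> (\<forall>i < dim_row M. \<forall>j < dim_col M. M $$ (i,j) \<le> 0)"

definition mat_ge :: "real mat \<Rightarrow> real mat \<Rightarrow> bool" where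
  "mat_ge M N \<longleftrightarrow> dim_row M = dim_row N \<and> dim_col M = dim_col N \<and>
     (\<forall>i < dim_row M. \<forall>j < dim_col M. M $$ (i,j) \<ge> N $$ (i,j))"

definition semi_monotone :: "real mat \<Rightarrow> bool" where
  "semi_monotone M \<longleftrightarrow> mat_nonneg (mp_inv M)"

definition rspectrum :: "real mat \<Rightarrow> complex set" where
  "rspectrum M = spectrum (map_mat complex_of_real M)"

definition rspectral_radius :: "real mat \<Rightarrow> real" where
  "rspectral_radius M = spectral_radius (map_mat complex_of_real M)"

definition double_proper_splitting :: "real mat \<Rightarrow> real mat \<Rightarrow> real mat \<Rightarrow> real mat \<Rightarrow> bool" where
  "double_proper_splitting A P R S \<longleftrightarrow>
     P \<in> carrier_mat (dim_row A) (dim_col A) \<and> R \<in> carrier_mat (dim_row A) (dim_col A) \<and>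
     S \<in> carrier_mat (dim_row A) (dim_col A) \<and> A = P - R + S \<and>
     mat_range P = mat_range A \<and> mat_kernel P = mat_kernel A"

definition double_proper_regular_splitting where
  "double_proper_regular_splitting A P R S \<longleftrightarrow> double_proper_splitting A P R S \<and>
     mat_nonneg (mp_inv P) \<and> mat_nonneg R \<and> mat_nonpos S"

definition double_proper_weak_regular_splitting where
  "double_proper_weak_regular_splitting A P R S \<longleftrightarrow> double_proper_splitting A P R S \<and>
     mat_nonneg (mp_inv P) \<and> mat_nonneg (mp_inv P * R) \<and> mat_nonpos (mp_inv P * S)"

end

(*
  Write W(B, C) for the block matrix [[B, C], [I, 0]]; a double splitting A = P - R + S iterates
  with B = P\<dagger>R and C = -P\<dagger>S.  When N(P) \<subseteq> N(A) and R(P) \<subseteq> R(A), the Moore--Penrose inverses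
  satisfy P\<dagger>PA\<dagger> = A\<dagger> and P\<dagger>AA\<dagger> = P\<dagger>, so (B + C) A\<dagger> = A\<dagger> - P\<dagger>.  If A\<dagger>, P\<dagger>, B and C are
  nonnegative, the moduli of a left eigenvector of W(B, C) for an eigenvalue of modulus at least 1
  would form a nonnegative vector a with P\<dagger>\<^sup>T a = 0, forcing the eigenvector to vanish; hence
  \<rho>(W(B, C)) < 1.  For a second such splitting with the same P and B \<le> B', B' + C' \<le> B + C, a right
  eigenvector of W(B', C') gives a nonnegative vector u with \<rho>(W(B', C')) u \<le> W(B, C) u, and the
  Collatz--Wielandt bound yields \<rho>(W(B', C')) \<le> \<rho>(W(B, C)).

  Both steps are applied to the splittings of (I - S2 P1\<dagger>) A and (I + R2 P1\<dagger>) A with first part P2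
  that the two given splittings induce.  The spectral hypotheses make I - S2 P1\<dagger> and I + R2 P1\<dagger>
  invertible, which keeps R(P2) inside the ranges of the two auxiliary matrices.
*)
theory Submission
  imports Defs
begin

lemma mult_assoc_dims:
  "dim_col (A :: 'a :: semiring_0 mat) = dim_row B \<Longrightarrow> dim_col B = dim_row C \<Longrightarrow> A * B * C = A * (B * C)"
  by (rule assoc_mult_mat, auto)

lemma transpose_mult_dims:
  "dim_col (A :: 'a :: comm_semiring_0 mat) = dim_row B \<Longrightarrow> transpose_mat (A * B) = transpose_mat B * transpose_mat A"
  by (rule transpose_mult, auto)

lemma mult_add_distrib_dims:
  "dim_col (A :: 'a :: semiring_0 mat) = dim_row B \<Longrightarrow> dim_row B = dim_row C \<Longrightarrow> dim_col B = dim_col C \<Longrightarrow>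
   A * (B + C) = A * B + A * C"
  by (rule mult_add_distrib_mat, auto)

lemma add_mult_distrib_dims:
  "dim_row (A :: 'a :: semiring_0 mat) = dim_row B \<Longrightarrow> dim_col A = dim_col B \<Longrightarrow> dim_col B = dim_row C \<Longrightarrow>
   (A + B) * C = A * C + B * C"
  by (rule add_mult_distrib_mat, auto)

lemma mult_minus_distrib_dims:
  "dim_col (A :: 'a :: ring mat) = dim_row B \<Longrightarrow> dim_row B = dim_row C \<Longrightarrow> dim_col B = dim_col C \<Longrightarrow>
   A * (B - C) = A * B - A * C"
  by (rule mult_minus_distrib_mat, auto)

lemma minus_mult_distrib_dims:
  "dim_row (A :: 'a :: ring mat) = dim_row B \<Longrightarrow> dim_col A = dim_col B \<Longrightarrow> dim_col B = dim_row C \<Longrightarrow>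
   (A - B) * C = A * C - B * C"
  by (rule minus_mult_distrib_mat, auto)

lemma mult_smult_dims:
  "dim_col (A :: 'a :: comm_ring mat) = dim_row B \<Longrightarrow> A * (k \<cdot>\<^sub>m B) = k \<cdot>\<^sub>m (A * B)"
  by (rule mult_smult_distrib, auto)

lemma smult_mult_dims:
  "dim_col (A :: 'a :: comm_ring mat) = dim_row B \<Longrightarrow> (k \<cdot>\<^sub>m A) * B = k \<cdot>\<^sub>m (A * B)"
  by (rule mult_smult_assoc_mat, auto)

lemmas mat_algebra_dims = mult_assoc_dims mult_add_distrib_dims add_mult_distrib_dims
  mult_minus_distrib_dims minus_mult_distrib_dims mult_smult_dims smult_mult_dims

lemma transpose_add_dims:
  "dim_row (A :: 'a :: ab_semigroup_add mat) = dim_row B \<Longrightarrow> dim_col A = dim_col B \<Longrightarrow>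
   transpose_mat (A + B) = transpose_mat A + transpose_mat B"
  by (rule eq_matI, auto)

lemma transpose_minus_dims:
  "dim_row (A :: 'a :: ab_group_add mat) = dim_row B \<Longrightarrow> dim_col A = dim_col B \<Longrightarrow>
   transpose_mat (A - B) = transpose_mat A - transpose_mat B"
  by (rule eq_matI, auto)

lemma transpose_smult: "transpose_mat (k \<cdot>\<^sub>m A) = k \<cdot>\<^sub>m transpose_mat A"
  by (rule eq_matI, auto)

lemma zero_smult_one_add [simp]:
  "dim_row (X :: 'a :: comm_ring_1 mat) = n \<Longrightarrow> dim_col X = n \<Longrightarrow> 0 \<cdot>\<^sub>m 1\<^sub>m n + X = X"
  by (rule eq_matI, auto)

lemma minus_self_mat [simp]:
  "dim_row (A :: 'a :: ab_group_add mat) = n \<Longrightarrow> dim_col A = m \<Longrightarrow> A - A = 0\<^sub>m n m"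
  by (rule eq_matI, auto)

lemma mat_mult_vec_entry:
  assumes "A \<in> carrier_mat r p" "v \<in> carrier_vec p" "i < r"
  shows "(A *\<^sub>v v) $ i = (\<Sum>j = 0..<p. A $$ (i,j) * v $ j)"
  using assms by (auto simp: scalar_prod_def intro!: sum.cong)

lemma zero_mat_mult_vec [simp]: "v \<in> carrier_vec m \<Longrightarrow> (0\<^sub>m n m :: 'a :: semiring_0 mat) *\<^sub>v v = 0\<^sub>v n"
  by (rule eq_vecI) (auto simp: scalar_prod_def)

lemma mult_mat_vec_zero [simp]: "A \<in> carrier_mat n m \<Longrightarrow> A *\<^sub>v 0\<^sub>v m = (0\<^sub>v n :: 'a :: semiring_0 vec)"
  by (rule eq_vecI) (auto simp: scalar_prod_def)

lemma smult_mat_mult_vec: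
  "dim_vec v = dim_col A \<Longrightarrow> (a \<cdot>\<^sub>m (A :: 'a :: comm_ring mat)) *\<^sub>v v = a \<cdot>\<^sub>v (A *\<^sub>v v)"
  by (rule eq_vecI) (auto simp: scalar_prod_def sum_distrib_left ac_simps intro!: sum.cong)

lemma smult_vec_mono: "0 \<le> (c :: real) \<Longrightarrow> x \<le> y \<Longrightarrow> c \<cdot>\<^sub>v x \<le> c \<cdot>\<^sub>v y"
  unfolding less_eq_vec_def by (auto intro: mult_left_mono)

lemma smult_append_vec: "a \<cdot>\<^sub>v (x @\<^sub>v y) = (a \<cdot>\<^sub>v x) @\<^sub>v (a \<cdot>\<^sub>v y)"
  by (rule eq_vecI) auto

lemma zero_append_vec: "0\<^sub>v n @\<^sub>v 0\<^sub>v m = (0\<^sub>v (n + m) :: 'a :: zero vec)"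
  by (rule eq_vecI) auto

lemma less_eq_vec_index: "x \<le> y \<Longrightarrow> i < dim_vec y \<Longrightarrow> x $ i \<le> y $ i"
  unfolding less_eq_vec_def by simp

lemma transpose_mult_self_eq_0:
  fixes Z :: "real mat"
  assumes Z: "Z \<in> carrier_mat a b" and ZZ: "transpose_mat Z * Z = 0\<^sub>m b b"
  shows "Z = 0\<^sub>m a b"
proof (rule eq_matI)
  fix i j assume "i < dim_row (0\<^sub>m a b :: real mat)" "j < dim_col (0\<^sub>m a b :: real mat)"
  hence i: "i < a" and j: "j < b" by auto
  have "(\<Sum>k = 0..<a. Z $$ (k,j) * Z $$ (k,j)) = (transpose_mat Z * Z) $$ (j,j)"
    using Z j by (auto simp: scalar_prod_def)
  also have "\<dots> = 0" using ZZ j by simp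
  finally have "\<forall>k\<in>{0..<a}. Z $$ (k,j) * Z $$ (k,j) = 0"
    by (subst sum_nonneg_eq_0_iff[symmetric], auto)
  thus "Z $$ (i,j) = (0\<^sub>m a b :: real mat) $$ (i,j)" using i j by auto
qed (use Z in auto)

section \<open>Existence and uniqueness of the Moore--Penrose inverse\<close>

lemma mp_inverse_unique:
  assumes X: "is_mp_inverse M X" and Y: "is_mp_inverse M Y"
  shows "X = Y"
proof -
  from X have X1: "M * X * M = M" and X2: "X * M * X = X"
    and X3: "transpose_mat (M * X) = M * X" and X4: "transpose_mat (X * M) = X * M"
    unfolding is_mp_inverse_def by auto
  from Y have Y1: "M * Y * M = M" and Y2: "Y * M * Y = Y"
    and Y3: "transpose_mat (M * Y) = M * Y" and Y4: "transpose_mat (Y * M) = Y * M"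
    unfolding is_mp_inverse_def by auto
  have d: "dim_row X = dim_col M" "dim_col X = dim_row M" "dim_row Y = dim_col M" "dim_col Y = dim_row M"
    using X Y unfolding is_mp_inverse_def by auto
  have MY: "transpose_mat M = transpose_mat M * (M * Y)"
  proof -
    have "transpose_mat M = transpose_mat (M * Y * M)" using Y1 by simp
    also have "\<dots> = transpose_mat M * transpose_mat (M * Y)" using d by (simp add: transpose_mult_dims)
    finally show ?thesis using Y3 by simp
  qed
  have XM: "transpose_mat M = X * M * transpose_mat M"
  proof -
    have "transpose_mat M = transpose_mat (M * (X * M))" using X1 d by (simp add: mult_assoc_dims)
    also have "\<dots> = transpose_mat (X * M) * transpose_mat M" using d by (simp add: transpose_mult_dims)
    finally show ?thesis using X4 by simp
  qed
  have "X = X * transpose_mat (M * X)" using X2 X3 d by (simp add: mult_assoc_dims)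
  also have "\<dots> = X * (transpose_mat X * (transpose_mat M * (M * Y)))"
    using MY d by (simp add: transpose_mult_dims)
  also have "\<dots> = X * (transpose_mat (M * X) * (M * Y))"
    using d by (simp add: mult_assoc_dims transpose_mult_dims)
  also have "\<dots> = X * M * X * (M * Y)" using X3 d by (simp add: mult_assoc_dims)
  also have "\<dots> = X * M * Y" using X2 d by (simp add: mult_assoc_dims)
  finally have eX: "X = X * M * Y" .
  have "Y = transpose_mat (Y * M) * Y" using Y2 Y4 by simp
  also have "\<dots> = X * M * transpose_mat M * transpose_mat Y * Y"
    using XM d by (simp add: transpose_mult_dims)
  also have "\<dots> = X * M * (Y * M * Y)" using Y4 d by (simp add: mult_assoc_dims transpose_mult_dims)
  also have "\<dots> = X * M * Y" using Y2 by simp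
  finally show ?thesis using eX by simp
qed

fun horner_mat :: "real mat \<Rightarrow> real list \<Rightarrow> real mat" where
  "horner_mat B [] = 0\<^sub>m (dim_row B) (dim_row B)"
| "horner_mat B (c # cs) = c \<cdot>\<^sub>m 1\<^sub>m (dim_row B) + B * horner_mat B cs"

lemma horner_mat_dim [simp]:
  "dim_row (horner_mat B cs) = dim_row B" "dim_col (horner_mat B cs) = dim_row B"
  by (induct cs, auto)

lemma horner_mat_commute:
  assumes B: "B \<in> carrier_mat n n"
  shows "B * horner_mat B cs = horner_mat B cs * B"
proof (induct cs)
  case (Cons c cs)
  have d: "dim_row B = n" "dim_col B = n" using B by auto
  have "B * horner_mat B (c # cs) = c \<cdot>\<^sub>m B + B * (B * horner_mat B cs)"
    using d by (simp add: mat_algebra_dims)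
  also have "\<dots> = c \<cdot>\<^sub>m B + B * (horner_mat B cs * B)" using Cons by simp
  also have "\<dots> = horner_mat B (c # cs) * B" using d by (simp add: mat_algebra_dims)
  finally show ?case .
qed (use B in auto)

lemma horner_mat_symmetric:
  assumes B: "B \<in> carrier_mat n n" and sym: "transpose_mat B = B"
  shows "transpose_mat (horner_mat B cs) = horner_mat B cs"
proof (induct cs)
  case (Cons c cs)
  have d: "dim_row B = n" "dim_col B = n" using B by auto
  have "transpose_mat (horner_mat B (c # cs)) = c \<cdot>\<^sub>m 1\<^sub>m n + transpose_mat (horner_mat B cs) * transpose_mat B"
    using d by (simp add: transpose_add_dims transpose_mult_dims transpose_smult)
  also have "\<dots> = horner_mat B (c # cs)" using Cons sym horner_mat_commute[OF B, of cs] d by simp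
  finally show ?case .
qed (use B in auto)

lemma mult_pow_mat: "B \<in> carrier_mat n n \<Longrightarrow> B * B ^\<^sub>m k = B ^\<^sub>m Suc k"
  by (induct k) (auto simp: mult_assoc_dims[symmetric])

lemma horner_mat_index:
  assumes B: "B \<in> carrier_mat n n" and i: "i < n" and j: "j < n"
  shows "horner_mat B cs $$ (i,j) = (\<Sum>k<length cs. cs ! k * (B ^\<^sub>m k) $$ (i,j))"
  using i j
proof (induct cs arbitrary: i j)
  case (Cons c cs)
  have "(B * horner_mat B cs) $$ (i,j) = (\<Sum>l = 0..<n. B $$ (i,l) * horner_mat B cs $$ (l,j))"
    using Cons.prems B by (simp add: scalar_prod_def)
  also have "\<dots> = (\<Sum>l = 0..<n. B $$ (i,l) * (\<Sum>k<length cs. cs ! k * (B ^\<^sub>m k) $$ (l,j)))"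
    using Cons by simp
  also have "\<dots> = (\<Sum>k<length cs. cs ! k * (\<Sum>l = 0..<n. B $$ (i,l) * (B ^\<^sub>m k) $$ (l,j)))"
    by (simp add: sum_distrib_left sum.swap[of _ "{0..<n}"] ac_simps)
  also have "\<dots> = (\<Sum>k<length cs. cs ! k * (B * B ^\<^sub>m k) $$ (i,j))"
    using Cons.prems B by (simp add: scalar_prod_def)
  also have "\<dots> = (\<Sum>k<length cs. cs ! k * (B ^\<^sub>m Suc k) $$ (i,j))"
    by (simp only: mult_pow_mat[OF B])
  finally have e: "(B * horner_mat B cs) $$ (i,j) = (\<Sum>k<length cs. cs ! k * (B ^\<^sub>m Suc k) $$ (i,j))" .
  have "horner_mat B (c # cs) $$ (i,j) = c * 1\<^sub>m n $$ (i,j) + (B * horner_mat B cs) $$ (i,j)"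
    using Cons.prems B by simp
  also have "\<dots> = (\<Sum>k<length (c # cs). (c # cs) ! k * (B ^\<^sub>m k) $$ (i,j))"
    unfolding e length_Cons sum.lessThan_Suc_shift nth_Cons_0 nth_Cons_Suc using B Cons.prems by simp
  finally show ?case .
qed (use B in auto)

lemma horner_mat_replicate_0:
  assumes B: "B \<in> carrier_mat n n"
  shows "horner_mat B (replicate k 0 @ cs) = B ^\<^sub>m k * horner_mat B cs"
proof (induct k)
  case (Suc k)
  then show ?case
    using B by (simp add: mult_assoc_dims[symmetric] mult_pow_mat[OF B])
qed (use B in simp)

text \<open>The \<open>n\<^sup>2 + 2\<close> powers \<open>B\<^sup>k\<close>, \<open>k \<le> n\<^sup>2 + 1\<close>, are linearly dependent: flattened, they are the
  columns of a square matrix whose last two rows vanish.\<close>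
lemma horner_mat_annihilator:
  assumes B: "B \<in> carrier_mat n n"
  shows "\<exists>cs. horner_mat B cs = 0\<^sub>m n n \<and> (\<exists>c\<in>set cs. c \<noteq> 0)"
proof -
  define N where "N = n * n"
  define K where "K = mat (N+2) (N+2)
    (\<lambda>(r,k). if r < N then (B ^\<^sub>m k) $$ (r div n, r mod n) else (0::real))"
  have K: "K \<in> carrier_mat (N+2) (N+2)" unfolding K_def by auto
  have "row K N = row K (N+1)" by (rule eq_vecI, auto simp: K_def)
  hence "det K = 0" using det_identical_rows[OF K, of N "N+1"] by auto
  then obtain v where v: "v \<in> carrier_vec (N+2)" and v0: "v \<noteq> 0\<^sub>v (N+2)" and Kv: "K *\<^sub>v v = 0\<^sub>v (N+2)"
    using det_0_iff_vec_prod_zero_field[OF K] by auto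
  define cs where "cs = list_of_vec v"
  have len: "length cs = N + 2" and csk: "\<And>k. k < N + 2 \<Longrightarrow> cs ! k = v $ k"
    using v unfolding cs_def by auto
  have "horner_mat B cs = 0\<^sub>m n n"
  proof (rule eq_matI)
    fix i j assume "i < dim_row (0\<^sub>m n n :: real mat)" "j < dim_col (0\<^sub>m n n :: real mat)"
    hence i: "i < n" and j: "j < n" by auto
    define r where "r = i * n + j"
    have "i * n + j < (i + 1) * n" using j by simp
    also have "\<dots> \<le> n * n" using i by (intro mult_le_mono1, simp)
    finally have rN: "r < N" unfolding r_def N_def .
    have rdiv: "r div n = i" "r mod n = j" unfolding r_def using j by auto
    have "0 = (K *\<^sub>v v) $ r" using Kv rN by simp
    also have "\<dots> = (\<Sum>k = 0..<N+2. K $$ (r,k) * v $ k)"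
      by (rule mat_mult_vec_entry[OF K v]) (use rN in simp)
    also have "\<dots> = (\<Sum>k = 0..<N+2. (B ^\<^sub>m k) $$ (i, j) * v $ k)"
      using rN rdiv by (intro sum.cong) (auto simp: K_def)
    also have "\<dots> = horner_mat B cs $$ (i,j)"
      using len csk horner_mat_index[OF B i j] by (auto simp: atLeast0LessThan intro!: sum.cong)
    finally show "horner_mat B cs $$ (i,j) = (0\<^sub>m n n :: real mat) $$ (i,j)" using i j by simp
  qed (use B in auto)
  moreover obtain k where "k < N + 2" "v $ k \<noteq> 0" using v0 v by (auto simp: vec_eq_iff)
  hence "\<exists>c\<in>set cs. c \<noteq> 0" using csk len by (metis nth_mem)
  ultimately show ?thesis by blast
qed

lemma symmetric_pow_mult_eq_0:
  fixes B X :: "real mat"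
  assumes B: "B \<in> carrier_mat n n" and sym: "transpose_mat B = B"
    and X: "X \<in> carrier_mat n p" and BX: "B ^\<^sub>m Suc k * X = 0\<^sub>m n p"
  shows "B * X = 0\<^sub>m n p"
  using X BX
proof (induct k arbitrary: X)
  case (Suc k)
  have "B ^\<^sub>m Suc k * (B * X) = B ^\<^sub>m Suc (Suc k) * X"
    using Suc.prems(1) B by (simp add: mult_assoc_dims)
  hence BBX: "B * (B * X) = 0\<^sub>m n p" using Suc B by auto
  have "transpose_mat (B * X) * (B * X) = transpose_mat X * (B * (B * X))"
    using Suc.prems(1) B sym by (simp add: transpose_mult_dims mult_assoc_dims)
  also have "\<dots> = 0\<^sub>m p p" using BBX Suc.prems(1) by simp
  finally show ?case using transpose_mult_self_eq_0[of "B * X" n p] Suc.prems(1) B by auto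
qed (use B in simp)

lemma replicate_zero_prefix:
  assumes "\<exists>x\<in>set xs. x \<noteq> (0 :: 'a :: zero)"
  obtains k c ys where "xs = replicate k 0 @ c # ys" "c \<noteq> 0"
proof -
  define k where "k = length (takeWhile (\<lambda>x. x = 0) xs)"
  have "\<forall>y\<in>set (takeWhile (\<lambda>x. x = 0) xs). y = 0" by (auto dest: set_takeWhileD)
  hence tw: "takeWhile (\<lambda>x. x = 0) xs = replicate k 0"
    unfolding k_def by (simp add: replicate_length_same)
  have "dropWhile (\<lambda>x. x = 0) xs \<noteq> []" using assms by (simp add: dropWhile_eq_Nil_conv)
  then obtain c ys where dw: "dropWhile (\<lambda>x. x = 0) xs = c # ys"
    by (cases "dropWhile (\<lambda>x. x = 0) xs") auto
  have "c \<noteq> 0" using hd_dropWhile[of "\<lambda>x. x = 0" xs] dw by fastforce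
  moreover have "xs = replicate k 0 @ c # ys"
    using takeWhile_dropWhile_id[of "\<lambda>x. x = 0" xs] tw dw by simp
  ultimately show ?thesis using that by blast
qed


text \<open>If \<open>p(B) = 0\<close> with \<open>p(x) = x\<^sup>k (c + x h(x))\<close> and \<open>c \<noteq> 0\<close>, then symmetry of \<open>B\<close> removes
  the factor \<open>x\<^sup>k\<close>, and \<open>G = - h(B) / c\<close> satisfies \<open>B G B = B\<close>.\<close>
lemma symmetric_group_inverse_exists:
  fixes B :: "real mat"
  assumes B: "B \<in> carrier_mat n n" and sym: "transpose_mat B = B"
  shows "\<exists>G. G \<in> carrier_mat n n \<and> transpose_mat G = G \<and> B * G = G * B \<and> B * G * B = B"
proof -
  from horner_mat_annihilator[OF B]
  obtain cs where ev: "horner_mat B cs = 0\<^sub>m n n" and nz: "\<exists>c\<in>set cs. c \<noteq> 0" by auto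
  obtain k c hs where cs: "cs = replicate k 0 @ c # hs" and c0: "c \<noteq> 0"
    using replicate_zero_prefix[OF nz] by blast
  define H where "H = horner_mat B hs"
  have H: "H \<in> carrier_mat n n" unfolding H_def using B by auto
  define F where "F = c \<cdot>\<^sub>m 1\<^sub>m n + B * H"
  have F: "F \<in> carrier_mat n n" unfolding F_def using H B by auto
  have "B ^\<^sub>m k * F = 0\<^sub>m n n"
    using ev horner_mat_replicate_0[OF B, of k "c # hs"] B unfolding F_def H_def cs by simp
  hence "B * F = 0\<^sub>m n n"
    using symmetric_pow_mult_eq_0[OF B sym F] F B by (cases k) auto
  hence BBH: "c \<cdot>\<^sub>m B + B * B * H = 0\<^sub>m n n" unfolding F_def using B H by (simp add: mat_algebra_dims)
  define G where "G = (- 1 / c) \<cdot>\<^sub>m H"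
  have G: "G \<in> carrier_mat n n" unfolding G_def using H by auto
  have BG: "B * G = G * B"
    unfolding G_def H_def using horner_mat_commute[OF B] B by (simp add: mult_smult_dims smult_mult_dims)
  have BBG: "B * B * G = B"
  proof (rule eq_matI)
    fix i j assume "i < dim_row B" "j < dim_col B"
    hence ij: "i < n" "j < n" using B by auto
    have "c * B $$ (i,j) + (B * B * H) $$ (i,j) = 0"
      using arg_cong[OF BBH, of "\<lambda>M. M $$ (i,j)"] ij B H by simp
    moreover have "(B * B * G) $$ (i,j) = (- 1 / c) * (B * B * H) $$ (i,j)"
      unfolding G_def using B H ij by (simp add: mult_smult_dims)
    ultimately have "c * (B * B * G) $$ (i,j) = c * B $$ (i,j)" using c0 by simp
    thus "(B * B * G) $$ (i,j) = B $$ (i,j)" using c0 by simp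
  qed (use B G in auto)
  have "B * G * B = B * (G * B)" using B G by (simp add: mult_assoc_dims)
  also have "\<dots> = B * (B * G)" using BG by simp
  also have "\<dots> = B * B * G" using B G by (simp add: mult_assoc_dims)
  finally have "B * G * B = B * B * G" .
  moreover have "transpose_mat G = G"
    unfolding G_def H_def using horner_mat_symmetric[OF B sym] by (simp add: transpose_smult)
  ultimately show ?thesis using G BG BBG by auto
qed


text \<open>With \<open>B = M\<^sup>T M\<close> and \<open>G\<close> as above, \<open>X = G M\<^sup>T\<close> satisfies the Penrose equations.\<close>
lemma mp_inverse_exists: "\<exists>X. is_mp_inverse M X"
proof -
  define m n where "m = dim_row M" and "n = dim_col M"
  have M: "M \<in> carrier_mat m n" unfolding m_def n_def by auto
  define B where "B = transpose_mat M * M"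
  have B: "B \<in> carrier_mat n n" unfolding B_def using M by auto
  have sym: "transpose_mat B = B" unfolding B_def using M by (simp add: transpose_mult_dims)
  from symmetric_group_inverse_exists[OF B sym] obtain G where G: "G \<in> carrier_mat n n"
    and Gsym: "transpose_mat G = G" and BG: "B * G = G * B" and BGB: "B * G * B = B" by auto
  define Z where "Z = M * (G * B) - M"
  have Z: "Z \<in> carrier_mat m n" unfolding Z_def using M G B by auto
  have "transpose_mat Z * Z = (transpose_mat (G * B) - 1\<^sub>m n) * (B * (G * B) - B)"
    unfolding Z_def B_def using M G by (simp add: transpose_minus_dims transpose_mult_dims mat_algebra_dims)
  also have "B * (G * B) - B = 0\<^sub>m n n" using BGB B G by (simp add: mult_assoc_dims)
  finally have "Z = 0\<^sub>m m n" using transpose_mult_self_eq_0[OF Z] G B by simp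
  have MGB: "M * (G * B) = M"
  proof (rule eq_matI)
    fix i j assume ij: "i < dim_row M" "j < dim_col M"
    have "Z $$ (i,j) = 0" using \<open>Z = 0\<^sub>m m n\<close> ij M by simp
    thus "(M * (G * B)) $$ (i,j) = M $$ (i,j)" unfolding Z_def using ij M G B by simp
  qed (use M G B in auto)
  define X where "X = G * transpose_mat M"
  have X: "X \<in> carrier_mat n m" unfolding X_def using G M by auto
  have "B * (G * transpose_mat M) = transpose_mat (M * (G * B))"
    using M G B Gsym sym by (simp add: transpose_mult_dims mult_assoc_dims)
  hence BGM: "B * (G * transpose_mat M) = transpose_mat M" using MGB by simp
  have XM: "X * M = G * B" unfolding X_def B_def using M G by (simp add: mult_assoc_dims)
  have "M * X * M = M * (G * B)" unfolding X_def B_def using M G by (simp add: mult_assoc_dims)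
  hence "M * X * M = M" using MGB by simp
  moreover have "X * M * X = X"
    using BGM unfolding XM unfolding X_def B_def using M G by (simp add: mult_assoc_dims)
  moreover have "transpose_mat (M * X) = M * X"
    unfolding X_def using M G Gsym by (simp add: transpose_mult_dims mult_assoc_dims)
  moreover have "transpose_mat (X * M) = X * M"
    unfolding XM using BG Gsym sym G B by (simp add: transpose_mult_dims)
  ultimately show ?thesis unfolding is_mp_inverse_def using X M by (intro exI[of _ X]) auto
qed

lemma is_mp_inverse_mp_inv: "is_mp_inverse M (mp_inv M)"
  unfolding mp_inv_def using mp_inverse_exists mp_inverse_unique by (metis theI)

lemma mp_invD:
  assumes "M \<in> carrier_mat m n"
  shows "mp_inv M \<in> carrier_mat n m" "M * mp_inv M * M = M" "mp_inv M * M * mp_inv M = mp_inv M"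
    "transpose_mat (M * mp_inv M) = M * mp_inv M" "transpose_mat (mp_inv M * M) = mp_inv M * M"
  using is_mp_inverse_mp_inv[of M] assms unfolding is_mp_inverse_def by auto

section \<open>Kernels, ranges and invertibility\<close>

lemma mat_kernel_subset_mult_eq_0:
  fixes A B Z :: "real mat"
  assumes A: "A \<in> carrier_mat a b" and B: "B \<in> carrier_mat c b" and Z: "Z \<in> carrier_mat b p"
    and ker: "mat_kernel A \<subseteq> mat_kernel B" and AZ: "A * Z = 0\<^sub>m a p"
  shows "B * Z = 0\<^sub>m c p"
proof (rule eq_matI)
  fix i j assume "i < dim_row (0\<^sub>m c p :: real mat)" "j < dim_col (0\<^sub>m c p :: real mat)"
  hence i: "i < c" and j: "j < p" by auto
  have "A *\<^sub>v col Z j = 0\<^sub>v a" using col_mult2[OF A Z j] AZ j by auto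
  hence "col Z j \<in> mat_kernel A" using A Z j by (auto intro!: mat_kernelI)
  hence "col Z j \<in> mat_kernel B" using ker by auto
  hence "col (B * Z) j = 0\<^sub>v c" using B col_mult2[OF B Z j] by (auto dest: mat_kernelD)
  hence "col (B * Z) j $ i = 0" using i by simp
  thus "(B * Z) $$ (i,j) = (0\<^sub>m c p :: real mat) $$ (i,j)" using i j B Z by simp
qed (use B Z in auto)

lemma mat_range_subset_imp_factor:
  fixes P Q :: "real mat"
  assumes P: "P \<in> carrier_mat a b" and Q: "Q \<in> carrier_mat a c" and rng: "mat_range P \<subseteq> mat_range Q"
  shows "\<exists>Z. Z \<in> carrier_mat c b \<and> P = Q * Z"
proof -
  have "\<exists>v. v \<in> carrier_vec c \<and> Q *\<^sub>v v = col P j" if j: "j < b" for j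
  proof -
    have "col P j = P *\<^sub>v unit_vec b j"
      by (rule eq_vecI) (use P j in \<open>auto simp: scalar_prod_right_unit\<close>)
    hence "col P j \<in> mat_range P" unfolding mat_range_def using P by auto
    hence "col P j \<in> mat_range Q" using rng by auto
    thus ?thesis unfolding mat_range_def using Q by auto
  qed
  then obtain f where f: "\<And>j. j < b \<Longrightarrow> f j \<in> carrier_vec c \<and> Q *\<^sub>v f j = col P j" by metis
  define Z where "Z = mat c b (\<lambda>(i,j). f j $ i)"
  have Z: "Z \<in> carrier_mat c b" unfolding Z_def by auto
  have colZ: "col Z j = f j" if "j < b" for j
    unfolding Z_def using that f[OF that] by (intro eq_vecI) auto
  have "P = Q * Z"
  proof (rule eq_matI)
    fix i j assume "i < dim_row (Q * Z)" "j < dim_col (Q * Z)"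
    hence i: "i < a" and j: "j < b" using Q Z by auto
    have "(Q * Z) $$ (i,j) = (Q *\<^sub>v f j) $ i" using col_mult2[OF Q Z j] colZ[OF j] i j Q Z by simp
    thus "P $$ (i,j) = (Q * Z) $$ (i,j)" using f[OF j] i j P by simp
  qed (use P Q Z in auto)
  thus ?thesis using Z by blast
qed

lemma mat_kernel_subset_mult_left:
  fixes A K :: "real mat"
  assumes A: "A \<in> carrier_mat m n" and K: "K \<in> carrier_mat m m"
  shows "mat_kernel A \<subseteq> mat_kernel (K * A)"
proof
  fix v assume "v \<in> mat_kernel A"
  hence v: "v \<in> carrier_vec n" and Av: "A *\<^sub>v v = 0\<^sub>v m" using A by (auto simp: mat_kernel_def)
  have "(K * A) *\<^sub>v v = K *\<^sub>v (A *\<^sub>v v)" using K A v by simp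
  also have "\<dots> = 0\<^sub>v m" using Av K by (auto intro!: eq_vecI simp: scalar_prod_def)
  finally have "(K * A) *\<^sub>v v = 0\<^sub>v m" .
  thus "v \<in> mat_kernel (K * A)" using K A v by (auto intro!: mat_kernelI)
qed

lemma mat_range_mult_subset:
  fixes M N :: "real mat"
  assumes M: "M \<in> carrier_mat m k" and N: "N \<in> carrier_mat k n"
  shows "mat_range (M * N) \<subseteq> mat_range M"
proof
  fix y assume "y \<in> mat_range (M * N)"
  then obtain x where x: "x \<in> carrier_vec n" and y: "y = (M * N) *\<^sub>v x"
    unfolding mat_range_def using M N by auto
  have "y = M *\<^sub>v (N *\<^sub>v x)" using y M N x by simp
  thus "y \<in> mat_range M"
    unfolding mat_range_def using M mult_mat_vec_carrier[OF N x] by (intro CollectI exI[of _ "N *\<^sub>v x"]) auto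
qed

lemma mat_range_uminus_subset: "mat_range (- M :: real mat) \<subseteq> mat_range M"
proof
  fix y assume "y \<in> mat_range (- M)"
  then obtain x where x: "x \<in> carrier_vec (dim_col M)" and y: "y = (- M) *\<^sub>v x"
    unfolding mat_range_def by auto
  have "y = M *\<^sub>v (- x)" unfolding y by (rule eq_vecI) (use x in \<open>auto simp: scalar_prod_uminus_left scalar_prod_uminus_right\<close>)
  thus "y \<in> mat_range M" unfolding mat_range_def using x by (intro CollectI exI[of _ "- x"]) auto
qed

lemma mult_mp_inv_mult_eq_of_kernel_subset:
  fixes P B :: "real mat"
  assumes P: "P \<in> carrier_mat a b" and B: "B \<in> carrier_mat c b" and ker: "mat_kernel P \<subseteq> mat_kernel B"
  shows "B * mp_inv P * P = B"
proof -
  define Y where "Y = mp_inv P"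
  note YD = mp_invD[OF P, folded Y_def]
  have d: "dim_row P = a" "dim_col P = b" "dim_row Y = b" "dim_col Y = a" "dim_row B = c" "dim_col B = b"
    using P B YD by auto
  define Z where "Z = 1\<^sub>m b - Y * P"
  have Z: "Z \<in> carrier_mat b b" unfolding Z_def using d by auto
  have "P * Z = P - P * Y * P" unfolding Z_def using d by (simp add: mat_algebra_dims)
  also have "\<dots> = 0\<^sub>m a b" using YD(2) d by simp
  finally have "B * Z = 0\<^sub>m c b" using mat_kernel_subset_mult_eq_0[OF P B Z ker] by simp
  hence e: "B - B * Y * P = 0\<^sub>m c b" unfolding Z_def using d by (simp add: mat_algebra_dims)
  show ?thesis unfolding Y_def[symmetric]
  proof (rule eq_matI)
    fix i j assume "i < dim_row B" "j < dim_col B"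
    with arg_cong[OF e, of "\<lambda>M. M $$ (i,j)"] d show "(B * Y * P) $$ (i,j) = B $$ (i,j)" by simp
  qed (use d in auto)
qed

lemma mp_inv_mult_mp_inv:
  fixes P A :: "real mat"
  assumes P: "P \<in> carrier_mat m n" and A: "A \<in> carrier_mat m n"
    and ker: "mat_kernel P \<subseteq> mat_kernel A" and rng: "mat_range P \<subseteq> mat_range A"
  shows "mp_inv P * P * mp_inv A = mp_inv A" "mp_inv P * A * mp_inv A = mp_inv P"
proof -
  define Y X where "Y = mp_inv P" and "X = mp_inv A"
  note YD = mp_invD[OF P, folded Y_def] and XD = mp_invD[OF A, folded X_def]
  obtain Z where Z: "Z \<in> carrier_mat n n" and PZ: "P = A * Z"
    using mat_range_subset_imp_factor[OF P A rng] by auto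
  have d: "dim_row P = m" "dim_col P = n" "dim_row A = m" "dim_col A = n" "dim_row Y = n" "dim_col Y = m"
    "dim_row X = n" "dim_col X = m" "dim_row Z = n" "dim_col Z = n"
    using P A YD XD Z by auto
  have AYP: "A * Y * P = A" unfolding Y_def by (rule mult_mp_inv_mult_eq_of_kernel_subset[OF P A ker])
  have "X = transpose_mat (X * A) * X" using XD(3,5) by simp
  also have "\<dots> = transpose_mat A * (transpose_mat X * X)" using d by (simp add: transpose_mult_dims mult_assoc_dims)
  finally have eX: "X = transpose_mat A * (transpose_mat X * X)" .
  have "Y * P * transpose_mat A = transpose_mat (A * transpose_mat (Y * P))"
    using d by (simp add: transpose_mult_dims)
  also have "\<dots> = transpose_mat (A * Y * P)" using YD(5) d by (simp add: mult_assoc_dims)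
  finally have YPA: "Y * P * transpose_mat A = transpose_mat A" using AYP by simp
  have "Y * P * X = Y * P * transpose_mat A * (transpose_mat X * X)"
    by (subst eX, insert d, simp add: mult_assoc_dims)
  thus "Y * P * X = X" using YPA eX by simp
  have "Y = Y * transpose_mat (P * Y)" using YD(3,4) d by (simp add: mult_assoc_dims)
  also have "\<dots> = Y * transpose_mat Y * transpose_mat P" using d by (simp add: transpose_mult_dims mult_assoc_dims)
  finally have eY: "Y = Y * transpose_mat Y * transpose_mat P" .
  have "A * X * P = A * X * A * Z" unfolding PZ using d by (simp add: mult_assoc_dims)
  hence "A * X * P = P" using XD(2) PZ by simp
  moreover have "transpose_mat (A * X * P) = transpose_mat P * transpose_mat (A * X)"
    by (rule transpose_mult_dims) (use d in simp)
  ultimately have PAX: "transpose_mat P * (A * X) = transpose_mat P" using XD(4) by simp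
  have "Y * A * X = Y * transpose_mat Y * (transpose_mat P * (A * X))"
    by (subst eY, insert d, simp add: mult_assoc_dims)
  thus "Y * A * X = Y" using PAX eY by simp
qed

lemma in_rspectrum_of_eigenvector:
  fixes M :: "real mat"
  assumes M: "M \<in> carrier_mat m m" and v: "v \<in> carrier_vec m" "v \<noteq> 0\<^sub>v m" and Mv: "M *\<^sub>v v = c \<cdot>\<^sub>v v"
  shows "complex_of_real c \<in> rspectrum M"
proof -
  define w where "w = map_vec complex_of_real v"
  have w: "w \<in> carrier_vec m" "w \<noteq> 0\<^sub>v m" unfolding w_def using v by (auto simp: vec_eq_iff)
  have "map_mat complex_of_real M *\<^sub>v w = map_vec complex_of_real (M *\<^sub>v v)"
    unfolding w_def by (rule of_real_hom.mult_mat_vec_hom[OF M v(1), symmetric])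
  also have "\<dots> = complex_of_real c \<cdot>\<^sub>v w" unfolding Mv w_def by (rule eq_vecI) auto
  finally show ?thesis
    unfolding rspectrum_def spectrum_def eigenvalue_def eigenvector_def using w M by auto
qed

lemma rspectrum_uminusD:
  fixes M :: "real mat"
  assumes M: "M \<in> carrier_mat m m" and x: "x \<in> rspectrum (- M)"
  shows "- x \<in> rspectrum M"
proof -
  have "map_mat complex_of_real (- M) = - map_mat complex_of_real M" by (rule eq_matI) auto
  with x obtain v where v: "v \<in> carrier_vec m" "v \<noteq> 0\<^sub>v m"
    and Mv: "- map_mat complex_of_real M *\<^sub>v v = x \<cdot>\<^sub>v v"
    unfolding rspectrum_def spectrum_def eigenvalue_def eigenvector_def using M by auto
  have "map_mat complex_of_real M *\<^sub>v v = - x \<cdot>\<^sub>v v"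
  proof (rule eq_vecI)
    fix i assume "i < dim_vec (- x \<cdot>\<^sub>v v)"
    thus "(map_mat complex_of_real M *\<^sub>v v) $ i = (- x \<cdot>\<^sub>v v) $ i"
      using arg_cong[OF Mv, of "\<lambda>w. w $ i"] v M by (simp add: minus_equation_iff)
  qed (use M v in auto)
  thus ?thesis
    unfolding rspectrum_def spectrum_def eigenvalue_def eigenvector_def using v M by auto
qed

lemma exists_right_inverse_of_injective:
  fixes K :: "real mat"
  assumes K: "K \<in> carrier_mat m m"
    and inj: "\<And>v. v \<in> carrier_vec m \<Longrightarrow> K *\<^sub>v v = 0\<^sub>v m \<Longrightarrow> v = 0\<^sub>v m"
  shows "\<exists>K'. K' \<in> carrier_mat m m \<and> K * K' = 1\<^sub>m m"
proof -
  have "det K \<noteq> 0" using det_0_iff_vec_prod_zero_field[OF K] inj by auto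
  hence "K \<in> Units (ring_mat TYPE(real) m undefined)" by (rule det_non_zero_imp_unit[OF K])
  thus ?thesis unfolding Units_def ring_mat_def by auto
qed

lemma one_minus_mult_vec_eq_0:
  fixes T :: "real mat"
  assumes T: "T \<in> carrier_mat m m" and spec: "1 \<notin> rspectrum T"
    and v: "v \<in> carrier_vec m" and Kv: "(1\<^sub>m m - T) *\<^sub>v v = 0\<^sub>v m"
  shows "v = 0\<^sub>v m"
proof (rule ccontr)
  assume v0: "v \<noteq> 0\<^sub>v m"
  have "v - T *\<^sub>v v = 0\<^sub>v m" using Kv T v minus_mult_distrib_mat_vec[of "1\<^sub>m m" m m T v] by simp
  have "T *\<^sub>v v = 1 \<cdot>\<^sub>v v"
  proof (rule eq_vecI)
    fix i assume "i < dim_vec (1 \<cdot>\<^sub>v v)"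
    with arg_cong[OF \<open>v - T *\<^sub>v v = 0\<^sub>v m\<close>, of "\<lambda>w. w $ i"] v T
    show "(T *\<^sub>v v) $ i = (1 \<cdot>\<^sub>v v) $ i" by simp
  qed (use v T in auto)
  from in_rspectrum_of_eigenvector[OF T v v0 this] spec show False by simp
qed


text \<open>\<open>(1 - T)\<^sup>-\<^sup>1\<close> maps \<open>R(A)\<close> into itself because \<open>(1 - T)\<^sup>-\<^sup>1 y = y + T (1 - T)\<^sup>-\<^sup>1 y\<close>.\<close>
lemma mat_range_subset_mult_left:
  fixes A T :: "real mat"
  assumes A: "A \<in> carrier_mat m n" and T: "T \<in> carrier_mat m m"
    and rngT: "mat_range T \<subseteq> mat_range A" and spec: "1 \<notin> rspectrum T"
  shows "mat_range A \<subseteq> mat_range ((1\<^sub>m m - T) * A)"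
proof
  define K where "K = 1\<^sub>m m - T"
  have K: "K \<in> carrier_mat m m" unfolding K_def using T by auto
  have Kv: "K *\<^sub>v v = v - T *\<^sub>v v" if "v \<in> carrier_vec m" for v
    unfolding K_def using that T minus_mult_distrib_mat_vec[of "1\<^sub>m m" m m T v] by simp
  obtain K' where K': "K' \<in> carrier_mat m m" and KK': "K * K' = 1\<^sub>m m"
    using exists_right_inverse_of_injective[OF K] one_minus_mult_vec_eq_0[OF T spec]
    unfolding K_def by blast
  fix y assume "y \<in> mat_range A"
  then obtain x where x: "x \<in> carrier_vec n" and y: "y = A *\<^sub>v x" unfolding mat_range_def using A by auto
  define y' where "y' = K' *\<^sub>v y"
  have y': "y' \<in> carrier_vec m" unfolding y'_def using K' by (intro carrier_vecI) simp
  have "K *\<^sub>v y' = (K * K') *\<^sub>v y" unfolding y'_def using K K' A x y by simp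
  hence Ky': "K *\<^sub>v y' = y" using KK' A x y by simp
  have "T *\<^sub>v y' \<in> mat_range T" unfolding mat_range_def using T y' by (intro CollectI exI[of _ y']) auto
  hence "T *\<^sub>v y' \<in> mat_range A" using rngT by auto
  then obtain w where w: "w \<in> carrier_vec n" and Tw: "T *\<^sub>v y' = A *\<^sub>v w"
    unfolding mat_range_def using A by auto
  have "y' = y + T *\<^sub>v y'"
  proof (rule eq_vecI)
    fix i assume "i < dim_vec (y + T *\<^sub>v y')"
    hence "i < m" using T by simp
    thus "y' $ i = (y + T *\<^sub>v y') $ i"
      using arg_cong[OF Kv[OF y'], of "\<lambda>v. v $ i"] Ky' T y' A y by simp
  qed (use A T y y' in simp)
  also have "\<dots> = A *\<^sub>v (x + w)" unfolding y Tw by (rule mult_add_distrib_mat_vec[OF A x w, symmetric])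
  finally have "y = K *\<^sub>v (A *\<^sub>v (x + w))" using Ky' by simp
  hence "y = (K * A) *\<^sub>v (x + w)" using K A x w by simp
  thus "y \<in> mat_range ((1\<^sub>m m - T) * A)"
    unfolding mat_range_def K_def using x w A T by (intro CollectI exI[of _ "x + w"]) auto
qed


section \<open>Nonnegative matrices\<close>

lemma mat_nonneg_mult:
  fixes A B :: "real mat"
  assumes A: "A \<in> carrier_mat r p" and B: "B \<in> carrier_mat p c" and "mat_nonneg A" "mat_nonneg B"
  shows "mat_nonneg (A * B)"
  using assms unfolding mat_nonneg_def by (auto simp: scalar_prod_def intro!: sum_nonneg)

lemma mat_nonpos_mult_nonneg_nonpos:
  fixes A B :: "real mat"
  assumes A: "A \<in> carrier_mat r p" and B: "B \<in> carrier_mat p c" and "mat_nonneg A" "mat_nonpos B"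
  shows "mat_nonpos (A * B)"
  using assms unfolding mat_nonneg_def mat_nonpos_def
  by (auto simp: scalar_prod_def intro!: sum_nonpos mult_nonneg_nonpos)

lemma mat_nonpos_mult_nonpos_nonneg:
  fixes A B :: "real mat"
  assumes A: "A \<in> carrier_mat r p" and B: "B \<in> carrier_mat p c" and "mat_nonpos A" "mat_nonneg B"
  shows "mat_nonpos (A * B)"
  using assms unfolding mat_nonneg_def mat_nonpos_def
  by (auto simp: scalar_prod_def intro!: sum_nonpos mult_nonpos_nonneg)

lemma mat_nonneg_mult_nonpos_nonpos:
  fixes A B :: "real mat"
  assumes A: "A \<in> carrier_mat r p" and B: "B \<in> carrier_mat p c" and "mat_nonpos A" "mat_nonpos B"
  shows "mat_nonneg (A * B)"
  using assms unfolding mat_nonneg_def mat_nonpos_def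
  by (auto simp: scalar_prod_def intro!: sum_nonneg mult_nonpos_nonpos)

lemma mat_nonneg_minus_nonpos:
  fixes A B :: "real mat"
  assumes "A \<in> carrier_mat r c" "B \<in> carrier_mat r c" "mat_nonneg A" "mat_nonpos B"
  shows "mat_nonneg (A - B)"
  using assms unfolding mat_nonneg_def mat_nonpos_def by (auto, meson order.trans)

lemma mat_nonneg_uminus_nonpos: "mat_nonpos (B :: real mat) \<Longrightarrow> mat_nonneg (- B)"
  unfolding mat_nonneg_def mat_nonpos_def by auto

lemma mat_nonpos_uminus_nonneg: "mat_nonneg (B :: real mat) \<Longrightarrow> mat_nonpos (- B)"
  unfolding mat_nonneg_def mat_nonpos_def by auto

lemma mat_nonneg_transpose: "mat_nonneg (B :: real mat) \<Longrightarrow> mat_nonneg (transpose_mat B)"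
  unfolding mat_nonneg_def by auto

lemma mat_nonneg_pow:
  assumes A: "A \<in> carrier_mat k k" and "mat_nonneg A"
  shows "mat_nonneg (A ^\<^sub>m j)"
proof (induct j)
  case 0
  then show ?case unfolding mat_nonneg_def using A by auto
next
  case (Suc j)
  then show ?case using mat_nonneg_mult[of "A ^\<^sub>m j" k k A k] assms by auto
qed

lemma mat_ge_mult_vec_mono:
  fixes M N :: "real mat"
  assumes MN: "mat_ge M N" and N: "N \<in> carrier_mat r c" and w: "w \<in> carrier_vec c" "0\<^sub>v c \<le> w"
  shows "N *\<^sub>v w \<le> M *\<^sub>v w"
proof -
  have M: "M \<in> carrier_mat r c" using MN N unfolding mat_ge_def by auto
  have "(N *\<^sub>v w) $ i \<le> (M *\<^sub>v w) $ i" if i: "i < r" for i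
    unfolding mat_mult_vec_entry[OF N w(1) i] mat_mult_vec_entry[OF M w(1) i]
  proof (rule sum_mono)
    fix j assume "j \<in> {0..<c}"
    hence "N $$ (i,j) \<le> M $$ (i,j)" "0 \<le> w $ j"
      using MN w i M unfolding mat_ge_def less_eq_vec_def by auto
    thus "N $$ (i,j) * w $ j \<le> M $$ (i,j) * w $ j" by (rule mult_right_mono)
  qed
  thus ?thesis using M N unfolding less_eq_vec_def by auto
qed

lemma mat_nonneg_mult_vec_mono:
  fixes A :: "real mat"
  assumes A: "A \<in> carrier_mat r c" "mat_nonneg A" and xy: "x \<le> y" and y: "y \<in> carrier_vec c"
  shows "A *\<^sub>v x \<le> A *\<^sub>v y"
proof -
  have x: "x \<in> carrier_vec c" using xy y unfolding less_eq_vec_def carrier_vec_def by auto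
  have "(A *\<^sub>v x) $ i \<le> (A *\<^sub>v y) $ i" if i: "i < r" for i
    unfolding mat_mult_vec_entry[OF A(1) x i] mat_mult_vec_entry[OF A(1) y i]
  proof (rule sum_mono)
    fix j assume "j \<in> {0..<c}"
    hence "0 \<le> A $$ (i,j)" "x $ j \<le> y $ j"
      using A xy y i unfolding mat_nonneg_def less_eq_vec_def by auto
    thus "A $$ (i,j) * x $ j \<le> A $$ (i,j) * y $ j" by (intro mult_left_mono)
  qed
  thus ?thesis using A unfolding less_eq_vec_def by auto
qed

lemma cmod_mult_vec_le:
  fixes B :: "real mat" and z :: "complex vec"
  assumes B: "B \<in> carrier_mat r c" "mat_nonneg B" and z: "z \<in> carrier_vec c" and i: "i < r"
  shows "cmod ((map_mat complex_of_real B *\<^sub>v z) $ i) \<le> (B *\<^sub>v map_vec cmod z) $ i"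
proof -
  have "cmod ((map_mat complex_of_real B *\<^sub>v z) $ i) = cmod (\<Sum>j = 0..<c. complex_of_real (B $$ (i,j)) * z $ j)"
    using B z i by (subst mat_mult_vec_entry[of _ r c]) auto
  also have "\<dots> \<le> (\<Sum>j = 0..<c. cmod (complex_of_real (B $$ (i,j)) * z $ j))" by (rule norm_sum)
  also have "\<dots> = (B *\<^sub>v map_vec cmod z) $ i"
    using B z i by (subst mat_mult_vec_entry[of _ r c]) (auto simp: norm_mult mat_nonneg_def intro!: sum.cong)
  finally show ?thesis .
qed

section \<open>Spectral radius\<close>

lemma eigenvalue_transpose:
  assumes "A \<in> carrier_mat n n" "eigenvalue A \<mu>"
  shows "eigenvalue (transpose_mat A) (\<mu> :: complex)"
  using assms eigenvalue_root_char_poly[of A n] eigenvalue_root_char_poly[of "transpose_mat A" n] by simp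

lemma rspectral_radius_mem_max:
  fixes W :: "real mat"
  assumes W: "W \<in> carrier_mat k k" and k: "0 < k"
  shows "\<exists>\<mu>\<in>rspectrum W. cmod \<mu> = rspectral_radius W"
    and "\<mu> \<in> rspectrum W \<Longrightarrow> cmod \<mu> \<le> rspectral_radius W"
proof -
  have Wc: "map_mat complex_of_real W \<in> carrier_mat k k" using W by auto
  from spectral_radius_mem_max(1)[OF Wc k] obtain \<nu> where
    "\<nu> \<in> spectrum (map_mat complex_of_real W)" "spectral_radius (map_mat complex_of_real W) = cmod \<nu>"
    by blast
  thus "\<exists>\<mu>\<in>rspectrum W. cmod \<mu> = rspectral_radius W"
    unfolding rspectrum_def rspectral_radius_def by metis
  show "cmod \<mu> \<le> rspectral_radius W" if "\<mu> \<in> rspectrum W"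
    using spectral_radius_mem_max(2)[OF Wc k, of "cmod \<mu>"] that
    unfolding rspectrum_def rspectral_radius_def by blast
qed

lemma rspectral_radius_nonneg:
  assumes "W \<in> carrier_mat k k" "0 < k"
  shows "0 \<le> rspectral_radius W"
proof -
  obtain \<mu> where "cmod \<mu> = rspectral_radius W" using rspectral_radius_mem_max(1)[OF assms] by blast
  thus ?thesis by (metis norm_ge_zero)
qed

lemma rspectral_radius_smult_less_1:
  fixes W :: "real mat"
  assumes W: "W \<in> carrier_mat k k" and k: "0 < k" and t: "rspectral_radius W < t"
  shows "rspectral_radius ((1 / t) \<cdot>\<^sub>m W) < 1"
proof -
  have t0: "0 < t" using rspectral_radius_nonneg[OF W k] t by linarith
  have M: "(1 / t) \<cdot>\<^sub>m W \<in> carrier_mat k k" using W by auto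
  obtain \<mu> where \<mu>: "\<mu> \<in> rspectrum ((1 / t) \<cdot>\<^sub>m W)" and eq: "cmod \<mu> = rspectral_radius ((1 / t) \<cdot>\<^sub>m W)"
    using rspectral_radius_mem_max(1)[OF M k] by auto
  then obtain v where v: "v \<in> carrier_vec k" "v \<noteq> 0\<^sub>v k"
    and Mv: "map_mat complex_of_real ((1 / t) \<cdot>\<^sub>m W) *\<^sub>v v = \<mu> \<cdot>\<^sub>v v"
    unfolding rspectrum_def spectrum_def eigenvalue_def eigenvector_def using W by auto
  have "map_mat complex_of_real W = complex_of_real t \<cdot>\<^sub>m map_mat complex_of_real ((1 / t) \<cdot>\<^sub>m W)"
    using t0 by (intro eq_matI) auto
  hence "map_mat complex_of_real W *\<^sub>v v = (complex_of_real t * \<mu>) \<cdot>\<^sub>v v"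
    using Mv v W by (simp add: smult_mat_mult_vec smult_smult_assoc)
  hence "complex_of_real t * \<mu> \<in> rspectrum W"
    unfolding rspectrum_def spectrum_def eigenvalue_def eigenvector_def using v W by auto
  hence "cmod (complex_of_real t * \<mu>) \<le> rspectral_radius W" by (rule rspectral_radius_mem_max(2)[OF W k])
  hence "t * cmod \<mu> \<le> rspectral_radius W" using t0 by (simp add: norm_mult)
  hence "t * cmod \<mu> < t * 1" using t by linarith
  hence "cmod \<mu> < 1" using t0 by (simp only: mult_less_cancel_left_pos)
  thus ?thesis using eq by simp
qed

lemma rspectral_radius_less_1_pow_bounded:
  fixes M :: "real mat"
  assumes M: "M \<in> carrier_mat k k" and rho: "rspectral_radius M < 1"
  obtains c where "\<And>j a b. a < k \<Longrightarrow> b < k \<Longrightarrow> (M ^\<^sub>m j) $$ (a,b) \<le> c"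
proof -
  have Mc: "map_mat complex_of_real M \<in> carrier_mat k k" using M by auto
  obtain c where c: "\<And>j. norm_bound (map_mat complex_of_real M ^\<^sub>m j) c"
    using spectral_radius_jnf_norm_bound_less_1_upper_triangular[OF Mc] rho
    unfolding rspectral_radius_def by auto
  have "(M ^\<^sub>m j) $$ (a,b) \<le> c" if ab: "a < k" "b < k" for j a b
  proof -
    have "norm (map_mat complex_of_real (M ^\<^sub>m j) $$ (a,b)) \<le> c"
      using c[of j] ab M unfolding norm_bound_def of_real_hom.mat_hom_pow[OF M] by auto
    thus ?thesis using ab M by simp
  qed
  thus ?thesis using that by blast
qed

lemma mat_nonneg_pow_mult_vec_ge:
  fixes M :: "real mat"
  assumes M: "M \<in> carrier_mat k k" "mat_nonneg M" and u: "u \<in> carrier_vec k" and c: "0 \<le> c"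
    and Mu: "c \<cdot>\<^sub>v u \<le> M *\<^sub>v u"
  shows "c ^ j \<cdot>\<^sub>v u \<le> M ^\<^sub>m j *\<^sub>v u"
proof (induct j)
  case 0
  show ?case using u M by simp
next
  case (Suc j)
  have Mj: "M ^\<^sub>m j \<in> carrier_mat k k" using M by simp
  have "c ^ Suc j \<cdot>\<^sub>v u = c \<cdot>\<^sub>v (c ^ j \<cdot>\<^sub>v u)" by (simp add: smult_smult_assoc)
  also have "\<dots> \<le> c \<cdot>\<^sub>v (M ^\<^sub>m j *\<^sub>v u)" using c Suc by (rule smult_vec_mono)
  also have "\<dots> = M ^\<^sub>m j *\<^sub>v (c \<cdot>\<^sub>v u)" using Mj u by (simp add: mult_mat_vec)
  also have "\<dots> \<le> M ^\<^sub>m j *\<^sub>v (M *\<^sub>v u)"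
    using mat_nonneg_mult_vec_mono[OF Mj mat_nonneg_pow[OF M] Mu] M u by simp
  also have "\<dots> = M ^\<^sub>m Suc j *\<^sub>v u" using assoc_mult_mat_vec[OF Mj M(1) u] by simp
  finally show ?case .
qed

text \<open>If \<open>\<rho>(W) < r\<close>, the powers of \<open>W / t\<close> stay bounded for \<open>\<rho>(W) < t < r\<close>, whereas
  \<open>(W / t)\<^sup>j u \<ge> (r / t)\<^sup>j u\<close> grows without bound.\<close>
lemma collatz_wielandt_lower_bound:
  fixes W :: "real mat"
  assumes W: "W \<in> carrier_mat k k" "mat_nonneg W"
    and u: "u \<in> carrier_vec k" "0\<^sub>v k \<le> u" "u \<noteq> 0\<^sub>v k" and r: "0 \<le> r" and Wu: "r \<cdot>\<^sub>v u \<le> W *\<^sub>v u"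
  shows "r \<le> rspectral_radius W"
proof (rule ccontr)
  assume "\<not> r \<le> rspectral_radius W"
  obtain i0 where i0: "i0 < k" "u $ i0 \<noteq> 0" using u(1,3) by (auto simp: vec_eq_iff)
  moreover have "0 \<le> u $ i0" using u(1,2) i0 unfolding less_eq_vec_def by auto
  ultimately have ui0: "0 < u $ i0" by simp
  have k: "0 < k" using i0 by simp
  define t where "t = (rspectral_radius W + r) / 2"
  have t: "rspectral_radius W < t" "t < r" "0 < t"
    using \<open>\<not> r \<le> rspectral_radius W\<close> rspectral_radius_nonneg[OF W(1) k] by (auto simp: t_def)
  define M where "M = (1 / t) \<cdot>\<^sub>m W"
  have M: "M \<in> carrier_mat k k" "mat_nonneg M" using W t unfolding M_def mat_nonneg_def by auto
  obtain c where c: "\<And>j a b. a < k \<Longrightarrow> b < k \<Longrightarrow> (M ^\<^sub>m j) $$ (a,b) \<le> c"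
    using rspectral_radius_less_1_pow_bounded[OF M(1)] rspectral_radius_smult_less_1[OF W(1) k t(1)]
    unfolding M_def by blast
  have "(r / t) \<cdot>\<^sub>v u = (1 / t) \<cdot>\<^sub>v (r \<cdot>\<^sub>v u)" by (simp add: smult_smult_assoc)
  also have "\<dots> \<le> (1 / t) \<cdot>\<^sub>v (W *\<^sub>v u)" using Wu t by (intro smult_vec_mono) auto
  also have "\<dots> = M *\<^sub>v u" unfolding M_def using W u by (simp add: smult_mat_mult_vec)
  finally have grow: "(r / t) ^ j \<cdot>\<^sub>v u \<le> M ^\<^sub>m j *\<^sub>v u" for j
    using mat_nonneg_pow_mult_vec_ge[OF M u(1)] r t by auto
  have bound: "(r / t) ^ j * u $ i0 \<le> c * (\<Sum>b = 0..<k. u $ b)" for j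
  proof -
    have "(r / t) ^ j * u $ i0 \<le> (M ^\<^sub>m j *\<^sub>v u) $ i0"
      using grow[of j] i0 M u unfolding less_eq_vec_def by auto
    also have "\<dots> = (\<Sum>b = 0..<k. (M ^\<^sub>m j) $$ (i0,b) * u $ b)"
      by (rule mat_mult_vec_entry) (use M u i0 in auto)
    also have "\<dots> \<le> (\<Sum>b = 0..<k. c * u $ b)"
      using c i0 u by (intro sum_mono mult_right_mono) (auto simp: less_eq_vec_def)
    finally show ?thesis by (simp add: sum_distrib_left)
  qed
  obtain j where "c * (\<Sum>b = 0..<k. u $ b) / u $ i0 < (r / t) ^ j"
    using real_arch_pow[of "r / t"] t by auto
  thus False using bound[of j] ui0 by (simp add: divide_less_eq)
qed

section \<open>Iteration matrices of double splittings\<close>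

text \<open>For a double splitting \<open>A = P - R + S\<close>, the iteration matrix of the paper is
  \<open>block_iteration_mat (P\<^sup>\<dagger> R) (- P\<^sup>\<dagger> S)\<close>.\<close>
definition block_iteration_mat :: "'a :: comm_ring_1 mat \<Rightarrow> 'a mat \<Rightarrow> 'a mat" where
  "block_iteration_mat B C = four_block_mat B C (1\<^sub>m (dim_row B)) (0\<^sub>m (dim_row B) (dim_row B))"

lemma block_iteration_mat_carrier [simp]:
  "B \<in> carrier_mat n n \<Longrightarrow> C \<in> carrier_mat n n \<Longrightarrow> block_iteration_mat B C \<in> carrier_mat (n + n) (n + n)"
  unfolding block_iteration_mat_def by auto

lemma map_block_iteration_mat:
  assumes "B \<in> carrier_mat n n" "C \<in> carrier_mat n n"
  shows "map_mat complex_of_real (block_iteration_mat B C) =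
    block_iteration_mat (map_mat complex_of_real B) (map_mat complex_of_real C)"
  unfolding block_iteration_mat_def using assms by (intro eq_matI) auto

lemma block_iteration_mult_vec:
  assumes "B \<in> carrier_mat n n" "C \<in> carrier_mat n n" "x \<in> carrier_vec n" "y \<in> carrier_vec n"
  shows "block_iteration_mat B C *\<^sub>v (x @\<^sub>v y) = (B *\<^sub>v x + C *\<^sub>v y) @\<^sub>v x"
  unfolding block_iteration_mat_def
  using assms four_block_mat_mult_vec[of B n n C n "1\<^sub>m n" n "0\<^sub>m n n" x y] by simp

lemma transpose_block_iteration_mult_vec:
  assumes "B \<in> carrier_mat n n" "C \<in> carrier_mat n n" "x \<in> carrier_vec n" "y \<in> carrier_vec n"
  shows "transpose_mat (block_iteration_mat B C) *\<^sub>v (x @\<^sub>v y) =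
    (transpose_mat B *\<^sub>v x + y) @\<^sub>v (transpose_mat C *\<^sub>v x)"
  unfolding block_iteration_mat_def
  using assms transpose_four_block_mat[of B n n C n "1\<^sub>m n" n "0\<^sub>m n n"]
    four_block_mat_mult_vec[of "transpose_mat B" n n "1\<^sub>m n" n "transpose_mat C" n "0\<^sub>m n n" x y] by simp

lemma mat_nonneg_block_iteration_mat:
  assumes "B \<in> carrier_mat n n" "C \<in> carrier_mat n n" "mat_nonneg B" "mat_nonneg C"
  shows "mat_nonneg (block_iteration_mat B C)"
  using assms unfolding mat_nonneg_def block_iteration_mat_def by auto

lemma block_iteration_left_eigenvector:
  fixes B C :: "real mat"
  assumes B: "B \<in> carrier_mat n n" and C: "C \<in> carrier_mat n n"
    and \<mu>: "\<mu> \<in> rspectrum (block_iteration_mat B C)"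
  obtains u v where "u \<in> carrier_vec n" "v \<in> carrier_vec n" "u @\<^sub>v v \<noteq> 0\<^sub>v (n + n)"
    "transpose_mat (map_mat complex_of_real B) *\<^sub>v u + v = \<mu> \<cdot>\<^sub>v u"
    "transpose_mat (map_mat complex_of_real C) *\<^sub>v u = \<mu> \<cdot>\<^sub>v v"
proof -
  define Bc Cc where "Bc = map_mat complex_of_real B" and "Cc = map_mat complex_of_real C"
  have Tc: "Bc \<in> carrier_mat n n" "Cc \<in> carrier_mat n n" using B C unfolding Bc_def Cc_def by auto
  have W: "block_iteration_mat Bc Cc \<in> carrier_mat (n + n) (n + n)" using Tc by simp
  have "eigenvalue (block_iteration_mat Bc Cc) \<mu>"
    using \<mu> map_block_iteration_mat[OF B C] unfolding rspectrum_def spectrum_def Bc_def Cc_def by simp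
  from eigenvalue_transpose[OF W this] obtain z where z: "z \<in> carrier_vec (n + n)" "z \<noteq> 0\<^sub>v (n + n)"
    and zeq: "transpose_mat (block_iteration_mat Bc Cc) *\<^sub>v z = \<mu> \<cdot>\<^sub>v z"
    unfolding eigenvalue_def eigenvector_def using W by auto
  define u v where "u = vec_first z n" and "v = vec_last z n"
  have uv: "u \<in> carrier_vec n" "v \<in> carrier_vec n" and zuv: "z = u @\<^sub>v v"
    using z unfolding u_def v_def by auto
  have "(transpose_mat Bc *\<^sub>v u + v) @\<^sub>v (transpose_mat Cc *\<^sub>v u) = (\<mu> \<cdot>\<^sub>v u) @\<^sub>v (\<mu> \<cdot>\<^sub>v v)"
    using zeq transpose_block_iteration_mult_vec[OF Tc uv] unfolding zuv smult_append_vec by simp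
  hence "transpose_mat Bc *\<^sub>v u + v = \<mu> \<cdot>\<^sub>v u" "transpose_mat Cc *\<^sub>v u = \<mu> \<cdot>\<^sub>v v"
    using Tc uv by (subst (asm) append_vec_eq; auto)+
  with that uv z zuv show ?thesis unfolding Bc_def Cc_def by blast
qed

lemma block_iteration_right_eigenvector:
  fixes B C :: "real mat"
  assumes B: "B \<in> carrier_mat n n" and C: "C \<in> carrier_mat n n"
    and \<mu>: "\<mu> \<in> rspectrum (block_iteration_mat B C)"
  obtains x y where "x \<in> carrier_vec n" "y \<in> carrier_vec n" "y \<noteq> 0\<^sub>v n"
    "map_mat complex_of_real B *\<^sub>v x + map_mat complex_of_real C *\<^sub>v y = \<mu> \<cdot>\<^sub>v x" "x = \<mu> \<cdot>\<^sub>v y"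
proof -
  define Bc Cc where "Bc = map_mat complex_of_real B" and "Cc = map_mat complex_of_real C"
  have Tc: "Bc \<in> carrier_mat n n" "Cc \<in> carrier_mat n n" using B C unfolding Bc_def Cc_def by auto
  have W: "block_iteration_mat Bc Cc \<in> carrier_mat (n + n) (n + n)" using Tc by simp
  have "eigenvalue (block_iteration_mat Bc Cc) \<mu>"
    using \<mu> map_block_iteration_mat[OF B C] unfolding rspectrum_def spectrum_def Bc_def Cc_def by simp
  then obtain z where z: "z \<in> carrier_vec (n + n)" "z \<noteq> 0\<^sub>v (n + n)"
    and zeq: "block_iteration_mat Bc Cc *\<^sub>v z = \<mu> \<cdot>\<^sub>v z"
    unfolding eigenvalue_def eigenvector_def using W by auto
  define x y where "x = vec_first z n" and "y = vec_last z n"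
  have xy: "x \<in> carrier_vec n" "y \<in> carrier_vec n" and zxy: "z = x @\<^sub>v y"
    using z unfolding x_def y_def by auto
  have "(Bc *\<^sub>v x + Cc *\<^sub>v y) @\<^sub>v x = (\<mu> \<cdot>\<^sub>v x) @\<^sub>v (\<mu> \<cdot>\<^sub>v y)"
    using zeq block_iteration_mult_vec[OF Tc xy] unfolding zxy smult_append_vec by simp
  hence eq: "Bc *\<^sub>v x + Cc *\<^sub>v y = \<mu> \<cdot>\<^sub>v x" "x = \<mu> \<cdot>\<^sub>v y"
    using Tc xy by (subst (asm) append_vec_eq; auto)+
  have "y \<noteq> 0\<^sub>v n"
  proof
    assume "y = 0\<^sub>v n"
    moreover from this have "x = 0\<^sub>v n" using eq(2) by (auto simp: vec_eq_iff)
    ultimately show False using z zxy by (simp add: zero_append_vec)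
  qed
  with that xy eq show ?thesis unfolding Bc_def Cc_def by blast
qed

lemma block_iteration_left_eigenvector_moduli:
  fixes B C :: "real mat" and u v :: "complex vec"
  assumes B: "B \<in> carrier_mat n n" "mat_nonneg B" and C: "C \<in> carrier_mat n n" "mat_nonneg C"
    and uv: "u \<in> carrier_vec n" "v \<in> carrier_vec n"
    and eq: "transpose_mat (map_mat complex_of_real B) *\<^sub>v u + v = \<mu> \<cdot>\<^sub>v u"
      "transpose_mat (map_mat complex_of_real C) *\<^sub>v u = \<mu> \<cdot>\<^sub>v v"
    and i: "i < n"
  shows "cmod \<mu> * cmod (u $ i) \<le> (transpose_mat B *\<^sub>v map_vec cmod u) $ i + cmod (v $ i)"
    and "cmod \<mu> * cmod (v $ i) \<le> (transpose_mat C *\<^sub>v map_vec cmod u) $ i"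
proof -
  have BC: "transpose_mat B \<in> carrier_mat n n" "transpose_mat C \<in> carrier_mat n n" using B C by auto
  note bound = cmod_mult_vec_le[OF BC(1) mat_nonneg_transpose[OF B(2)] uv(1) i]
    cmod_mult_vec_le[OF BC(2) mat_nonneg_transpose[OF C(2)] uv(1) i]
  have "cmod \<mu> * cmod (u $ i) = cmod ((transpose_mat (map_mat complex_of_real B) *\<^sub>v u) $ i + v $ i)"
    using arg_cong[OF eq(1), of "\<lambda>w. w $ i"] i uv B by (simp add: norm_mult)
  also have "\<dots> \<le> cmod ((transpose_mat (map_mat complex_of_real B) *\<^sub>v u) $ i) + cmod (v $ i)"
    by (rule norm_triangle_ineq)
  finally show "cmod \<mu> * cmod (u $ i) \<le> (transpose_mat B *\<^sub>v map_vec cmod u) $ i + cmod (v $ i)"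
    using bound(1) by (simp add: map_mat_transpose)
  have "cmod \<mu> * cmod (v $ i) = cmod ((transpose_mat (map_mat complex_of_real C) *\<^sub>v u) $ i)"
    using arg_cong[OF eq(2), of "\<lambda>w. w $ i"] i uv C by (simp add: norm_mult)
  thus "cmod \<mu> * cmod (v $ i) \<le> (transpose_mat C *\<^sub>v map_vec cmod u) $ i"
    using bound(2) by (simp add: map_mat_transpose)
qed

text \<open>Multiplying the subinvariance by \<open>X\<^sup>T \<ge> 0\<close> and using the identity gives \<open>Y\<^sup>T a \<le> 0\<close>.\<close>
lemma subinvariant_vector_annihilated:
  fixes Y X R S :: "real mat" and a :: "real vec"
  assumes Y: "Y \<in> carrier_mat n m" and X: "X \<in> carrier_mat n m"
    and R: "R \<in> carrier_mat m n" and S: "S \<in> carrier_mat m n"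
    and nY: "mat_nonneg Y" and nX: "mat_nonneg X" and iden: "Y * R * X + Y * S * X = X - Y"
    and a: "a \<in> carrier_vec n" "0\<^sub>v n \<le> a"
    and sub: "a \<le> transpose_mat (Y * R) *\<^sub>v a + transpose_mat (Y * S) *\<^sub>v a"
  shows "transpose_mat (Y * R) *\<^sub>v a = 0\<^sub>v n" "transpose_mat (Y * S) *\<^sub>v a = 0\<^sub>v n"
proof -
  have YR: "transpose_mat (Y * R) \<in> carrier_mat n n" and YS: "transpose_mat (Y * S) \<in> carrier_mat n n"
    using Y R S by auto
  have XT: "transpose_mat X \<in> carrier_mat m n" using X by auto
  have "transpose_mat X *\<^sub>v a \<le> transpose_mat X *\<^sub>v (transpose_mat (Y * R) *\<^sub>v a + transpose_mat (Y * S) *\<^sub>v a)"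
    using mat_nonneg_mult_vec_mono[OF XT mat_nonneg_transpose[OF nX] sub] YR YS a by auto
  also have "\<dots> = transpose_mat X *\<^sub>v (transpose_mat (Y * R) *\<^sub>v a) + transpose_mat X *\<^sub>v (transpose_mat (Y * S) *\<^sub>v a)"
    using XT YR YS a by (simp add: mult_add_distrib_mat_vec)
  also have "\<dots> = transpose_mat (Y * R * X) *\<^sub>v a + transpose_mat (Y * S * X) *\<^sub>v a"
    using X Y R S assoc_mult_mat_vec[OF XT YR a(1)] assoc_mult_mat_vec[OF XT YS a(1)]
    by (simp only: transpose_mult_dims index_mult_mat(2,3) carrier_matD)
  also have "\<dots> = transpose_mat (X - Y) *\<^sub>v a"
    unfolding iden[symmetric] using X Y R S a by (simp add: transpose_add_dims add_mult_distrib_mat_vec[of _ m n])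
  also have "\<dots> = transpose_mat X *\<^sub>v a - transpose_mat Y *\<^sub>v a"
    using X Y a by (simp add: transpose_minus_dims minus_mult_distrib_mat_vec[of _ m n])
  finally have le: "transpose_mat X *\<^sub>v a \<le> transpose_mat X *\<^sub>v a - transpose_mat Y *\<^sub>v a" .
  have Ya0: "0\<^sub>v m \<le> transpose_mat Y *\<^sub>v a"
    using mat_nonneg_mult_vec_mono[OF _ mat_nonneg_transpose[OF nY] a(2)] Y a by auto
  have Ya: "transpose_mat Y *\<^sub>v a = 0\<^sub>v m"
  proof (rule eq_vecI)
    fix i assume "i < dim_vec (0\<^sub>v m :: real vec)"
    hence i: "i < m" by simp
    have "(transpose_mat Y *\<^sub>v a) $ i \<le> 0" using le i X Y unfolding less_eq_vec_def by auto
    moreover have "0 \<le> (transpose_mat Y *\<^sub>v a) $ i" using Ya0 i unfolding less_eq_vec_def by auto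
    ultimately show "(transpose_mat Y *\<^sub>v a) $ i = 0\<^sub>v m $ i" using i by simp
  qed (use Y in simp)
  show "transpose_mat (Y * R) *\<^sub>v a = 0\<^sub>v n"
    using Y R a Ya by (simp add: transpose_mult_dims)
  show "transpose_mat (Y * S) *\<^sub>v a = 0\<^sub>v n"
    using Y S a Ya by (simp add: transpose_mult_dims)
qed

text \<open>For a left eigenvector \<open>(u, v)\<close> of an eigenvalue \<open>\<mu>\<close> with \<open>|\<mu>| \<ge> 1\<close>, the moduli
  \<open>a = |u|\<close> and \<open>b = |v|\<close> satisfy \<open>a \<le> |\<mu>| a \<le> (Y R)\<^sup>T a + b\<close> and \<open>b \<le> |\<mu>| b \<le> (Y S)\<^sup>T a\<close>.\<close>
lemma block_iteration_eigenvalue_less_1: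
  fixes Y X R S :: "real mat"
  assumes Y: "Y \<in> carrier_mat n m" and X: "X \<in> carrier_mat n m"
    and R: "R \<in> carrier_mat m n" and S: "S \<in> carrier_mat m n"
    and nY: "mat_nonneg Y" and nX: "mat_nonneg X" and nYR: "mat_nonneg (Y * R)" and nYS: "mat_nonneg (Y * S)"
    and iden: "Y * R * X + Y * S * X = X - Y"
    and \<mu>: "\<mu> \<in> rspectrum (block_iteration_mat (Y * R) (Y * S))"
  shows "cmod \<mu> < 1"
proof (rule ccontr)
  assume "\<not> cmod \<mu> < 1"
  hence s: "1 \<le> cmod \<mu>" by simp
  have T: "Y * R \<in> carrier_mat n n" "Y * S \<in> carrier_mat n n" using Y R S by auto
  obtain u v where uv: "u \<in> carrier_vec n" "v \<in> carrier_vec n" and z: "u @\<^sub>v v \<noteq> 0\<^sub>v (n + n)"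
    and eq: "transpose_mat (map_mat complex_of_real (Y * R)) *\<^sub>v u + v = \<mu> \<cdot>\<^sub>v u"
      "transpose_mat (map_mat complex_of_real (Y * S)) *\<^sub>v u = \<mu> \<cdot>\<^sub>v v"
    using block_iteration_left_eigenvector[OF T \<mu>] by blast
  define a where "a = map_vec cmod u"
  have a: "a \<in> carrier_vec n" "0\<^sub>v n \<le> a" unfolding a_def less_eq_vec_def using uv by auto
  note moduli = block_iteration_left_eigenvector_moduli[OF T(1) nYR T(2) nYS uv eq, folded a_def]
  have grow: "x \<le> cmod \<mu> * x" if "0 \<le> x" for x using mult_right_mono[OF s that] by simp
  have "a $ i \<le> (transpose_mat (Y * R) *\<^sub>v a) $ i + (transpose_mat (Y * S) *\<^sub>v a) $ i" if i: "i < n" for i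
  proof -
    have "a $ i \<le> cmod \<mu> * a $ i" using grow i uv unfolding a_def by simp
    moreover have "cmod (v $ i) \<le> cmod \<mu> * cmod (v $ i)" by (rule grow) simp
    ultimately show ?thesis using moduli[OF i] i uv unfolding a_def by simp
  qed
  hence "a \<le> transpose_mat (Y * R) *\<^sub>v a + transpose_mat (Y * S) *\<^sub>v a"
    using a T R S unfolding less_eq_vec_def by simp
  note annihilated = subinvariant_vector_annihilated[OF Y X R S nY nX iden a this]
  have "v $ i = 0 \<and> u $ i = 0" if i: "i < n" for i
  proof -
    have "cmod \<mu> * cmod (v $ i) \<le> 0" "cmod \<mu> * cmod (u $ i) \<le> cmod (v $ i)"
      using moduli[OF i] annihilated i by simp_all
    moreover have "\<mu> \<noteq> 0" using s by auto
    ultimately show ?thesis by (simp add: mult_le_0_iff)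
  qed
  hence "u = 0\<^sub>v n" "v = 0\<^sub>v n" using uv by (auto simp: vec_eq_iff)
  thus False using z by (simp add: zero_append_vec)
qed

lemma block_iteration_rspectral_radius_less_1:
  fixes Y X R S :: "real mat"
  assumes Y: "Y \<in> carrier_mat n m" and X: "X \<in> carrier_mat n m"
    and R: "R \<in> carrier_mat m n" and S: "S \<in> carrier_mat m n" and n: "0 < n"
    and "mat_nonneg Y" "mat_nonneg X" "mat_nonneg (Y * R)" "mat_nonneg (Y * S)"
    and "Y * R * X + Y * S * X = X - Y"
  shows "rspectral_radius (block_iteration_mat (Y * R) (Y * S)) < 1"
proof -
  have "block_iteration_mat (Y * R) (Y * S) \<in> carrier_mat (n + n) (n + n)" using Y R S by simp
  from rspectral_radius_mem_max(1)[OF this] obtain \<mu> where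
    "\<mu> \<in> rspectrum (block_iteration_mat (Y * R) (Y * S))"
    "cmod \<mu> = rspectral_radius (block_iteration_mat (Y * R) (Y * S))"
    using n by auto
  with block_iteration_eigenvalue_less_1[OF assms(1-4,6-10)] show ?thesis by metis
qed

lemma block_iteration_rspectral_radius_ge:
  fixes B C :: "real mat" and w :: "real vec"
  assumes B: "B \<in> carrier_mat n n" "mat_nonneg B" and C: "C \<in> carrier_mat n n" "mat_nonneg C"
    and w: "w \<in> carrier_vec n" "0\<^sub>v n \<le> w" "w \<noteq> 0\<^sub>v n" and r: "0 \<le> r"
    and sub: "r \<cdot>\<^sub>v (r \<cdot>\<^sub>v w) \<le> B *\<^sub>v (r \<cdot>\<^sub>v w) + C *\<^sub>v w"
  shows "r \<le> rspectral_radius (block_iteration_mat B C)"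
proof -
  define u where "u = (r \<cdot>\<^sub>v w) @\<^sub>v w"
  have rw: "r \<cdot>\<^sub>v w \<in> carrier_vec n" "0\<^sub>v n \<le> r \<cdot>\<^sub>v w"
    using w r unfolding less_eq_vec_def by auto
  have u: "u \<in> carrier_vec (n + n)" "0\<^sub>v (n + n) \<le> u" "u \<noteq> 0\<^sub>v (n + n)"
  proof -
    show "u \<in> carrier_vec (n + n)" unfolding u_def using w by simp
    show "0\<^sub>v (n + n) \<le> u"
      unfolding u_def zero_append_vec[symmetric] using append_vec_le[of "0\<^sub>v n" n "r \<cdot>\<^sub>v w"] rw w by simp
    have wu: "w $ i = u $ (n + i)" if "i < n" for i unfolding u_def using that w by simp
    show "u \<noteq> 0\<^sub>v (n + n)"
    proof
      assume "u = 0\<^sub>v (n + n)"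
      hence "w = 0\<^sub>v n" using wu w(1) by (intro eq_vecI) auto
      with w(3) show False by simp
    qed
  qed
  have "(r \<cdot>\<^sub>v (r \<cdot>\<^sub>v w)) @\<^sub>v (r \<cdot>\<^sub>v w) \<le> (B *\<^sub>v (r \<cdot>\<^sub>v w) + C *\<^sub>v w) @\<^sub>v (r \<cdot>\<^sub>v w)"
    using append_vec_le[of "r \<cdot>\<^sub>v (r \<cdot>\<^sub>v w)" n "B *\<^sub>v (r \<cdot>\<^sub>v w) + C *\<^sub>v w"] sub w B C by simp
  hence "r \<cdot>\<^sub>v u \<le> block_iteration_mat B C *\<^sub>v u"
    unfolding u_def smult_append_vec block_iteration_mult_vec[OF B(1) C(1) rw(1) w(1)] .
  from collatz_wielandt_lower_bound[OF _ mat_nonneg_block_iteration_mat[OF B(1) C(1) B(2) C(2)] u r this]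
  show ?thesis using B C by simp
qed

lemma mat_ge_block_mult_vec:
  fixes B C B' C' :: "real mat"
  assumes B: "B \<in> carrier_mat n n" and C: "C \<in> carrier_mat n n"
    and B': "B' \<in> carrier_mat n n" and C': "C' \<in> carrier_mat n n"
    and BB': "mat_ge B' B" and BC: "mat_ge (B + C) (B' + C')"
    and w: "w \<in> carrier_vec n" "0\<^sub>v n \<le> w" and r: "0 \<le> r" "r \<le> 1"
  shows "B' *\<^sub>v (r \<cdot>\<^sub>v w) + C' *\<^sub>v w \<le> B *\<^sub>v (r \<cdot>\<^sub>v w) + C *\<^sub>v w"
proof -
  have Bw: "B *\<^sub>v w \<le> B' *\<^sub>v w" by (rule mat_ge_mult_vec_mono[OF BB' B w])
  have BCw: "B' *\<^sub>v w + C' *\<^sub>v w \<le> B *\<^sub>v w + C *\<^sub>v w"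
    using mat_ge_mult_vec_mono[OF BC add_carrier_mat[OF C', of B'] w] B C B' C' w
    by (simp add: add_mult_distrib_mat_vec)
  have "(B' *\<^sub>v (r \<cdot>\<^sub>v w)) $ i + (C' *\<^sub>v w) $ i \<le> (B *\<^sub>v (r \<cdot>\<^sub>v w)) $ i + (C *\<^sub>v w) $ i"
    if i: "i < n" for i
  proof -
    have p0: "0 \<le> (B' *\<^sub>v w) $ i - (B *\<^sub>v w) $ i" using less_eq_vec_index[OF Bw] i B' by simp
    have "(B' *\<^sub>v w + C' *\<^sub>v w) $ i \<le> (B *\<^sub>v w + C *\<^sub>v w) $ i"
      by (rule less_eq_vec_index[OF BCw]) (use i C in simp)
    moreover have "(B' *\<^sub>v w + C' *\<^sub>v w) $ i = (B' *\<^sub>v w) $ i + (C' *\<^sub>v w) $ i"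
      by (rule index_add_vec(1)) (use i C' in simp)
    moreover have "(B *\<^sub>v w + C *\<^sub>v w) $ i = (B *\<^sub>v w) $ i + (C *\<^sub>v w) $ i"
      by (rule index_add_vec(1)) (use i C in simp)
    ultimately have "(B' *\<^sub>v w) $ i - (B *\<^sub>v w) $ i \<le> (C *\<^sub>v w) $ i - (C' *\<^sub>v w) $ i" by linarith
    with mult_left_le_one_le[OF p0 r] have "r * (B' *\<^sub>v w) $ i + (C' *\<^sub>v w) $ i \<le> r * (B *\<^sub>v w) $ i + (C *\<^sub>v w) $ i"
      by (simp add: algebra_simps)
    thus ?thesis using B B' w i by (simp add: mult_mat_vec)
  qed
  thus ?thesis using B C B' C' w unfolding less_eq_vec_def by simp
qed

text \<open>A right eigenvector \<open>(x, y)\<close> of \<open>W'\<close> for an eigenvalue \<open>\<mu>\<close> of modulus \<open>r = \<rho>(W')\<close> has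
  \<open>x = \<mu> y\<close>, so \<open>w = |y|\<close> satisfies \<open>r\<^sup>2 w \<le> B' r w + C' w\<close>, and the right-hand side only
  grows when passing to \<open>B\<close> and \<open>C\<close> because \<open>r \<le> 1\<close>.\<close>
lemma block_iteration_rspectral_radius_mono:
  fixes B C B' C' :: "real mat"
  assumes B: "B \<in> carrier_mat n n" and C: "C \<in> carrier_mat n n"
    and B': "B' \<in> carrier_mat n n" and C': "C' \<in> carrier_mat n n" and n: "0 < n"
    and nB: "mat_nonneg B" and nC: "mat_nonneg C" and nB': "mat_nonneg B'" and nC': "mat_nonneg C'"
    and BB': "mat_ge B' B" and BC: "mat_ge (B + C) (B' + C')"
    and r1: "rspectral_radius (block_iteration_mat B' C') \<le> 1"
  shows "rspectral_radius (block_iteration_mat B' C') \<le> rspectral_radius (block_iteration_mat B C)"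
proof -
  define r where "r = rspectral_radius (block_iteration_mat B' C')"
  have "block_iteration_mat B' C' \<in> carrier_mat (n + n) (n + n)" using B' C' by simp
  from rspectral_radius_mem_max(1)[OF this] n obtain \<mu> where
    \<mu>: "\<mu> \<in> rspectrum (block_iteration_mat B' C')" and r\<mu>: "cmod \<mu> = r"
    unfolding r_def by auto
  have r: "0 \<le> r" "r \<le> 1" using r\<mu> r1 norm_ge_zero[of \<mu>] unfolding r_def by auto
  obtain x y where xy: "x \<in> carrier_vec n" "y \<in> carrier_vec n" "y \<noteq> 0\<^sub>v n"
    and eq: "map_mat complex_of_real B' *\<^sub>v x + map_mat complex_of_real C' *\<^sub>v y = \<mu> \<cdot>\<^sub>v x" "x = \<mu> \<cdot>\<^sub>v y"
    using block_iteration_right_eigenvector[OF B' C' \<mu>] by blast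
  define w where "w = map_vec cmod y"
  have w: "w \<in> carrier_vec n" "0\<^sub>v n \<le> w" "w \<noteq> 0\<^sub>v n"
    unfolding w_def less_eq_vec_def using xy by (auto simp: vec_eq_iff)
  have x_w: "map_vec cmod x = r \<cdot>\<^sub>v w"
    unfolding w_def using eq(2) xy r\<mu> by (intro eq_vecI) (auto simp: norm_mult)
  have "r * (r * w $ i) \<le> (B' *\<^sub>v (r \<cdot>\<^sub>v w)) $ i + (C' *\<^sub>v w) $ i" if i: "i < n" for i
  proof -
    have "r * (r * w $ i) = cmod ((map_mat complex_of_real B' *\<^sub>v x) $ i + (map_mat complex_of_real C' *\<^sub>v y) $ i)"
      using arg_cong[OF eq(1), of "\<lambda>v. v $ i"] arg_cong[OF x_w, of "\<lambda>v. v $ i"] i xy w B' C' r\<mu>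
      by (simp add: norm_mult)
    also have "\<dots> \<le> cmod ((map_mat complex_of_real B' *\<^sub>v x) $ i) + cmod ((map_mat complex_of_real C' *\<^sub>v y) $ i)"
      by (rule norm_triangle_ineq)
    finally show ?thesis
      using cmod_mult_vec_le[OF B' nB' xy(1) i] cmod_mult_vec_le[OF C' nC' xy(2) i]
      unfolding x_w w_def by linarith
  qed
  hence "r \<cdot>\<^sub>v (r \<cdot>\<^sub>v w) \<le> B' *\<^sub>v (r \<cdot>\<^sub>v w) + C' *\<^sub>v w"
    using w B' C' unfolding less_eq_vec_def by simp
  also have "\<dots> \<le> B *\<^sub>v (r \<cdot>\<^sub>v w) + C *\<^sub>v w" by (rule mat_ge_block_mult_vec[OF B C B' C' BB' BC w(1,2) r])
  finally show ?thesis
    using block_iteration_rspectral_radius_ge[OF B nB C nC w r(1)] unfolding r_def by simp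
qed

section \<open>Convergence and comparison of double splittings\<close>

lemma splitting_remainder_mult_vec:
  fixes A P R S :: "real mat"
  assumes carriers: "P \<in> carrier_mat m n" "R \<in> carrier_mat m n" "S \<in> carrier_mat m n"
    and split: "A = P - R + S" and v: "v \<in> carrier_vec n"
  shows "R *\<^sub>v v = P *\<^sub>v v + S *\<^sub>v v - A *\<^sub>v v"
proof -
  have A: "A \<in> carrier_mat m n" using carriers split by simp
  have "R = P + S - A" by (rule eq_matI) (use carriers split in auto)
  also have "(P + S - A) *\<^sub>v v = (P + S) *\<^sub>v v - A *\<^sub>v v"
    using carriers A v by (intro minus_mult_distrib_mat_vec) auto
  finally show ?thesis using carriers v by (simp add: add_mult_distrib_mat_vec)
qed

lemma mat_kernel_splitting_remainder:
  fixes A P R S :: "real mat"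
  assumes carriers: "P \<in> carrier_mat m n" "R \<in> carrier_mat m n" "S \<in> carrier_mat m n"
    and split: "A = P - R + S"
    and kerP: "mat_kernel A \<subseteq> mat_kernel P" and kerS: "mat_kernel A \<subseteq> mat_kernel S"
  shows "mat_kernel A \<subseteq> mat_kernel R"
proof
  fix v assume vA: "v \<in> mat_kernel A"
  have A: "A \<in> carrier_mat m n" using carriers split by simp
  have v: "v \<in> carrier_vec n" using vA A by (auto simp: mat_kernel_def)
  have "R *\<^sub>v v = P *\<^sub>v v + S *\<^sub>v v - A *\<^sub>v v" by (rule splitting_remainder_mult_vec[OF carriers split v])
  also have "\<dots> = 0\<^sub>v m + 0\<^sub>v m - 0\<^sub>v m"
  proof -
    have "v \<in> mat_kernel P" "v \<in> mat_kernel S" using vA kerP kerS by auto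
    thus ?thesis using mat_kernelD(2)[OF carriers(1)] mat_kernelD(2)[OF carriers(3)] mat_kernelD(2)[OF A vA]
      by simp
  qed
  also have "\<dots> = 0\<^sub>v m" by (rule eq_vecI) auto
  finally show "v \<in> mat_kernel R" using carriers v by (auto intro: mat_kernelI)
qed

lemma mat_range_splitting_remainder:
  fixes A P R S :: "real mat"
  assumes carriers: "P \<in> carrier_mat m n" "R \<in> carrier_mat m n" "S \<in> carrier_mat m n"
    and split: "A = P - R + S"
    and rngP: "mat_range P \<subseteq> mat_range A" and rngS: "mat_range S \<subseteq> mat_range A"
  shows "mat_range R \<subseteq> mat_range A"
proof
  have A: "A \<in> carrier_mat m n" using carriers split by simp
  fix y assume "y \<in> mat_range R"
  then obtain v where v: "v \<in> carrier_vec n" and y: "y = R *\<^sub>v v" unfolding mat_range_def using carriers by auto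
  have "P *\<^sub>v v \<in> mat_range A" "S *\<^sub>v v \<in> mat_range A"
    using rngP rngS v carriers unfolding mat_range_def by auto
  then obtain a b where ab: "a \<in> carrier_vec n" "b \<in> carrier_vec n" "P *\<^sub>v v = A *\<^sub>v a" "S *\<^sub>v v = A *\<^sub>v b"
    unfolding mat_range_def using A by auto
  have "y = A *\<^sub>v a + A *\<^sub>v b - A *\<^sub>v v"
    unfolding y splitting_remainder_mult_vec[OF carriers split v] ab(3,4) ..
  also have "\<dots> = A *\<^sub>v (a + b - v)"
    using A ab v by (simp add: mult_add_distrib_mat_vec mult_minus_distrib_mat_vec)
  finally show "y \<in> mat_range A" unfolding mat_range_def using A ab v by (intro CollectI exI[of _ "a + b - v"]) auto
qed

lemma mult_mp_inv_mult_splitting: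
  fixes A P R S Q :: "real mat"
  assumes carriers: "P \<in> carrier_mat m n" "R \<in> carrier_mat m n" "S \<in> carrier_mat m n" "Q \<in> carrier_mat k n"
    and split: "A = P - R + S" and ker: "mat_kernel P \<subseteq> mat_kernel Q"
  shows "Q * mp_inv P * A = Q - Q * mp_inv P * R + Q * mp_inv P * S"
proof -
  have Y: "mp_inv P \<in> carrier_mat n m" using mp_invD(1)[OF carriers(1)] .
  have "Q * mp_inv P * A = Q * mp_inv P * P - Q * mp_inv P * R + Q * mp_inv P * S"
    unfolding split using carriers Y by (simp add: mat_algebra_dims)
  thus ?thesis using mult_mp_inv_mult_eq_of_kernel_subset[OF carriers(1,4) ker] by simp
qed

lemma double_splitting_rspectral_radius_less_1:
  fixes A P R S :: "real mat"
  assumes carriers: "P \<in> carrier_mat m n" "R \<in> carrier_mat m n" "S \<in> carrier_mat m n" and n: "0 < n"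
    and split: "A = P - R + S"
    and ker: "mat_kernel P \<subseteq> mat_kernel A" and rng: "mat_range P \<subseteq> mat_range A"
    and nA: "mat_nonneg (mp_inv A)" and nP: "mat_nonneg (mp_inv P)"
    and nPR: "mat_nonneg (mp_inv P * R)" and nPS: "mat_nonpos (mp_inv P * S)"
  shows "rspectral_radius (block_iteration_mat (mp_inv P * R) (- (mp_inv P * S))) < 1"
proof -
  have A: "A \<in> carrier_mat m n" using carriers split by simp
  define Y X where "Y = mp_inv P" and "X = mp_inv A"
  have Y: "Y \<in> carrier_mat n m" and X: "X \<in> carrier_mat n m"
    unfolding Y_def X_def using mp_invD(1)[OF carriers(1)] mp_invD(1)[OF A] by auto
  have "Y * R * X + Y * (- S) * X = Y * (R - S) * X"
    using X Y carriers by (simp add: mat_algebra_dims add_uminus_minus_mat[of _ n m])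
  also have "R - S = P - A" by (rule eq_matI) (use carriers split in auto)
  also have "Y * (P - A) * X = Y * P * X - Y * A * X" using X Y A carriers by (simp add: mat_algebra_dims)
  also have "\<dots> = X - Y" using mp_inv_mult_mp_inv[OF carriers(1) A ker rng] unfolding X_def Y_def by simp
  finally have iden: "Y * R * X + Y * (- S) * X = X - Y" .
  have "mat_nonneg (Y * (- S))" using mat_nonneg_uminus_nonpos[OF nPS] Y carriers unfolding Y_def by simp
  from block_iteration_rspectral_radius_less_1[OF Y X carriers(2) _ n, of "- S"] this iden nP nA nPR
  show ?thesis using Y carriers unfolding X_def Y_def by simp
qed

lemma double_splitting_rspectral_radius_compare:
  fixes A1 A2 P R1 S1 R2 S2 :: "real mat"
  assumes carriers: "P \<in> carrier_mat m n" "R1 \<in> carrier_mat m n" "S1 \<in> carrier_mat m n"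
      "R2 \<in> carrier_mat m n" "S2 \<in> carrier_mat m n" and n: "0 < n"
    and split1: "A1 = P - R1 + S1" and split2: "A2 = P - R2 + S2"
    and nR1: "mat_nonneg (mp_inv P * R1)" and nS1: "mat_nonpos (mp_inv P * S1)"
    and nR2: "mat_nonneg (mp_inv P * R2)" and nS2: "mat_nonpos (mp_inv P * S2)"
    and geR: "mat_ge (mp_inv P * R2) (mp_inv P * R1)" and geA: "mat_ge (mp_inv P * A2) (mp_inv P * A1)"
    and conv: "rspectral_radius (block_iteration_mat (mp_inv P * R2) (- (mp_inv P * S2))) \<le> 1"
  shows "rspectral_radius (block_iteration_mat (mp_inv P * R2) (- (mp_inv P * S2)))
    \<le> rspectral_radius (block_iteration_mat (mp_inv P * R1) (- (mp_inv P * S1)))"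
proof -
  define Y where "Y = mp_inv P"
  have Y: "Y \<in> carrier_mat n m" unfolding Y_def using mp_invD(1)[OF carriers(1)] .
  have remainder: "Y * R + - (Y * S) = Y * P - Y * (P - R + S)"
    if "R \<in> carrier_mat m n" "S \<in> carrier_mat m n" for R S
  proof -
    have "Y * (P - R + S) = Y * P - Y * R + Y * S" using that Y carriers by (simp add: mat_algebra_dims)
    thus ?thesis by (intro eq_matI) (use that Y carriers in auto)
  qed
  have "mat_ge (Y * R1 + - (Y * S1)) (Y * R2 + - (Y * S2))"
    using geA Y carriers unfolding remainder[OF carriers(2,3)] remainder[OF carriers(4,5)]
      split1 split2 Y_def[symmetric] mat_ge_def by auto
  moreover have "mat_nonneg (- (Y * S1))" "mat_nonneg (- (Y * S2))"
    using nS1 nS2 unfolding Y_def by (auto intro: mat_nonneg_uminus_nonpos)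
  ultimately show ?thesis
    using block_iteration_rspectral_radius_mono[of "Y * R1" n "- (Y * S1)" "Y * R2" "- (Y * S2)"]
      Y carriers n nR1 nR2 geR conv unfolding Y_def by auto
qed

text \<open>Lemmas named \<open>hat\<close> concern \<open>(I - S\<^sub>2 P\<^sub>1\<^sup>\<dagger>) A\<close>, the paper's A-hat, and lemmas named \<open>hat_cal\<close>
  concern \<open>(I + R\<^sub>2 P\<^sub>1\<^sup>\<dagger>) A\<close>, its calligraphic A-hat; both split with first part \<open>P\<^sub>2\<close>.\<close>
locale double_splitting_pair =
  fixes A P1 R1 S1 P2 R2 S2 :: "real mat" and m n :: nat
  assumes A: "A \<in> carrier_mat m n" and n: "0 < n"
    and weak_regular: "double_proper_weak_regular_splitting A P1 R1 S1"
    and regular: "double_proper_regular_splitting A P2 R2 S2"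
    and kernel_S2: "mat_kernel S2 = mat_kernel P2" and range_S2: "mat_range S2 = mat_range P2"

begin

lemma carriers:
  "P1 \<in> carrier_mat m n" "R1 \<in> carrier_mat m n" "S1 \<in> carrier_mat m n"
  "P2 \<in> carrier_mat m n" "R2 \<in> carrier_mat m n" "S2 \<in> carrier_mat m n"
  "mp_inv P1 \<in> carrier_mat n m" "mp_inv P2 \<in> carrier_mat n m"
  using weak_regular regular A mp_invD(1)[of P1 m n] mp_invD(1)[of P2 m n]
  unfolding double_proper_weak_regular_splitting_def double_proper_regular_splitting_def
    double_proper_splitting_def by auto

lemma splittings: "A = P1 - R1 + S1" "A = P2 - R2 + S2"
  using weak_regular regular
  unfolding double_proper_weak_regular_splitting_def double_proper_regular_splitting_def
    double_proper_splitting_def by auto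

lemma kernels: "mat_kernel P1 = mat_kernel A" "mat_kernel P2 = mat_kernel A"
  and ranges: "mat_range P1 = mat_range A" "mat_range P2 = mat_range A"
  using weak_regular regular
  unfolding double_proper_weak_regular_splitting_def double_proper_regular_splitting_def
    double_proper_splitting_def by auto

lemma signs:
  "mat_nonneg (mp_inv P1 * R1)" "mat_nonpos (mp_inv P1 * S1)"
  "mat_nonneg (mp_inv P2)" "mat_nonneg R2" "mat_nonpos S2"
  using weak_regular regular
  unfolding double_proper_weak_regular_splitting_def double_proper_regular_splitting_def by auto

lemma mp_inv_P2_signs: "mat_nonneg (mp_inv P2 * R2)" "mat_nonpos (mp_inv P2 * S2)"
  using mat_nonneg_mult[OF carriers(8,5) signs(3,4)] mat_nonpos_mult_nonneg_nonpos[OF carriers(8,6) signs(3,5)] .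

lemma mult_mp_inv_P1_mult_A:
  "S2 * mp_inv P1 * A = S2 - S2 * mp_inv P1 * R1 + S2 * mp_inv P1 * S1"
  "R2 * mp_inv P1 * A = R2 - R2 * mp_inv P1 * R1 + R2 * mp_inv P1 * S1"
proof -
  have "mat_kernel A \<subseteq> mat_kernel R2"
    using mat_kernel_splitting_remainder[OF carriers(4-6) splittings(2)] kernels(2) kernel_S2 by auto
  thus "R2 * mp_inv P1 * A = R2 - R2 * mp_inv P1 * R1 + R2 * mp_inv P1 * S1"
    using mult_mp_inv_mult_splitting[OF carriers(1-3,5) splittings(1)] kernels(1) by simp
  show "S2 * mp_inv P1 * A = S2 - S2 * mp_inv P1 * R1 + S2 * mp_inv P1 * S1"
    using mult_mp_inv_mult_splitting[OF carriers(1-3,6) splittings(1)] kernels kernel_S2 by simp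
qed

lemma hat_splitting:
  "(1\<^sub>m m - S2 * mp_inv P1) * A = P2 - (R2 - S2 * mp_inv P1 * R1) + - (S2 * mp_inv P1 * S1)"
proof -
  have "(1\<^sub>m m - S2 * mp_inv P1) * A = A - S2 * mp_inv P1 * A"
    using A carriers by (simp add: mat_algebra_dims)
  thus ?thesis unfolding mult_mp_inv_P1_mult_A
    by (intro eq_matI) (use carriers A splittings(2) in auto)
qed

lemma hat_cal_splitting:
  "(1\<^sub>m m + R2 * mp_inv P1) * A = P2 - (R2 * mp_inv P1 * R1 - S2) + R2 * mp_inv P1 * S1"
proof -
  have "(1\<^sub>m m + R2 * mp_inv P1) * A = A + R2 * mp_inv P1 * A"
    using A carriers by (simp add: mat_algebra_dims)
  thus ?thesis unfolding mult_mp_inv_P1_mult_A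
    by (intro eq_matI) (use carriers A splittings(2) in auto)
qed

lemma hat_signs:
  "mat_nonneg (mp_inv P2 * (R2 - S2 * mp_inv P1 * R1))"
  "mat_nonpos (mp_inv P2 * - (S2 * mp_inv P1 * S1))"
proof -
  have c: "mp_inv P2 * R2 \<in> carrier_mat n n" "mp_inv P2 * S2 \<in> carrier_mat n n"
    "mp_inv P1 * R1 \<in> carrier_mat n n" "mp_inv P1 * S1 \<in> carrier_mat n n"
    using carriers by auto
  have "mp_inv P2 * (R2 - S2 * mp_inv P1 * R1) = mp_inv P2 * R2 - mp_inv P2 * S2 * (mp_inv P1 * R1)"
    using carriers by (simp add: mat_algebra_dims)
  also have "mat_nonneg \<dots>"
    using mat_nonneg_minus_nonpos[OF c(1) _ mp_inv_P2_signs(1)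
        mat_nonpos_mult_nonpos_nonneg[OF c(2,3) mp_inv_P2_signs(2) signs(1)]] c by simp
  finally show "mat_nonneg (mp_inv P2 * (R2 - S2 * mp_inv P1 * R1))" .
  have "mp_inv P2 * - (S2 * mp_inv P1 * S1) = - (mp_inv P2 * S2 * (mp_inv P1 * S1))"
    using carriers by (simp add: mat_algebra_dims)
  also have "mat_nonpos \<dots>"
    by (rule mat_nonpos_uminus_nonneg[OF mat_nonneg_mult_nonpos_nonpos[OF c(2,4) mp_inv_P2_signs(2) signs(2)]])
  finally show "mat_nonpos (mp_inv P2 * - (S2 * mp_inv P1 * S1))" .
qed

lemma hat_cal_signs:
  "mat_nonneg (mp_inv P2 * (R2 * mp_inv P1 * R1 - S2))"
  "mat_nonpos (mp_inv P2 * (R2 * mp_inv P1 * S1))"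
proof -
  have c: "mp_inv P2 * R2 \<in> carrier_mat n n" "mp_inv P2 * S2 \<in> carrier_mat n n"
    "mp_inv P1 * R1 \<in> carrier_mat n n" "mp_inv P1 * S1 \<in> carrier_mat n n"
    using carriers by auto
  have "mp_inv P2 * (R2 * mp_inv P1 * R1 - S2) = mp_inv P2 * R2 * (mp_inv P1 * R1) - mp_inv P2 * S2"
    using carriers by (simp add: mat_algebra_dims)
  also have "mat_nonneg \<dots>"
    using mat_nonneg_minus_nonpos[OF _ c(2) mat_nonneg_mult[OF c(1,3) mp_inv_P2_signs(1) signs(1)]
        mp_inv_P2_signs(2)] c by simp
  finally show "mat_nonneg (mp_inv P2 * (R2 * mp_inv P1 * R1 - S2))" .
  have "mp_inv P2 * (R2 * mp_inv P1 * S1) = mp_inv P2 * R2 * (mp_inv P1 * S1)"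
    using carriers by (simp add: mat_algebra_dims)
  also have "mat_nonpos \<dots>" by (rule mat_nonpos_mult_nonneg_nonpos[OF c(1,4) mp_inv_P2_signs(1) signs(2)])
  finally show "mat_nonpos (mp_inv P2 * (R2 * mp_inv P1 * S1))" .
qed

lemma hat_iteration_convergent:
  assumes spec: "1 \<notin> rspectrum (S2 * mp_inv P1)"
    and nonneg: "mat_nonneg (mp_inv ((1\<^sub>m m - S2 * mp_inv P1) * A))"
  shows "rspectral_radius (block_iteration_mat (mp_inv P2 * (R2 - S2 * mp_inv P1 * R1))
    (- (mp_inv P2 * - (S2 * mp_inv P1 * S1)))) < 1"
proof (rule double_splitting_rspectral_radius_less_1[OF _ _ _ n hat_splitting _ _ nonneg signs(3)
      hat_signs])
  have "mat_range (S2 * mp_inv P1) \<subseteq> mat_range A"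
    using mat_range_mult_subset[OF carriers(6,7)] range_S2 ranges(2) by auto
  from mat_range_subset_mult_left[OF A _ this spec]
  show "mat_range P2 \<subseteq> mat_range ((1\<^sub>m m - S2 * mp_inv P1) * A)"
    unfolding ranges(2) using carriers by auto
  have "1\<^sub>m m - S2 * mp_inv P1 \<in> carrier_mat m m" using carriers by auto
  from mat_kernel_subset_mult_left[OF A this]
  show "mat_kernel P2 \<subseteq> mat_kernel ((1\<^sub>m m - S2 * mp_inv P1) * A)" unfolding kernels(2) .
qed (use carriers in auto)

lemma hat_cal_iteration_convergent:
  assumes spec: "- 1 \<notin> rspectrum (R2 * mp_inv P1)"
    and nonneg: "mat_nonneg (mp_inv ((1\<^sub>m m + R2 * mp_inv P1) * A))"
  shows "rspectral_radius (block_iteration_mat (mp_inv P2 * (R2 * mp_inv P1 * R1 - S2))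
    (- (mp_inv P2 * (R2 * mp_inv P1 * S1)))) < 1"
proof (rule double_splitting_rspectral_radius_less_1[OF _ _ _ n hat_cal_splitting _ _ nonneg signs(3)
      hat_cal_signs])
  have R2Y1: "R2 * mp_inv P1 \<in> carrier_mat m m" using carriers by auto
  have K: "1\<^sub>m m + R2 * mp_inv P1 = 1\<^sub>m m - - (R2 * mp_inv P1)" by (rule eq_matI) (use R2Y1 in auto)
  have "mat_range R2 \<subseteq> mat_range A"
    using mat_range_splitting_remainder[OF carriers(4-6) splittings(2)] ranges(2) range_S2 by auto
  hence "mat_range (- (R2 * mp_inv P1)) \<subseteq> mat_range A"
    using mat_range_uminus_subset mat_range_mult_subset[OF carriers(5,7)] by blast
  moreover have "1 \<notin> rspectrum (- (R2 * mp_inv P1))" using rspectrum_uminusD[OF R2Y1, of 1] spec by auto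
  ultimately show "mat_range P2 \<subseteq> mat_range ((1\<^sub>m m + R2 * mp_inv P1) * A)"
    unfolding K ranges(2) using mat_range_subset_mult_left[OF A uminus_carrier_mat[OF R2Y1]] by blast
  have "1\<^sub>m m + R2 * mp_inv P1 \<in> carrier_mat m m" using R2Y1 by auto
  from mat_kernel_subset_mult_left[OF A this]
  show "mat_kernel P2 \<subseteq> mat_kernel ((1\<^sub>m m + R2 * mp_inv P1) * A)" unfolding kernels(2) .
qed (use carriers in auto)

lemma hat_iteration_mat:
  "block_iteration_mat (mp_inv P2 * (R2 - S2 * mp_inv P1 * R1))
     (- (mp_inv P2 * - (S2 * mp_inv P1 * S1))) =
   four_block_mat (mp_inv P2 * R2 - mp_inv P2 * S2 * mp_inv P1 * R1) (mp_inv P2 * S2 * mp_inv P1 * S1)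
     (1\<^sub>m n) (0\<^sub>m n n)"
proof -
  have "- (mp_inv P2 * - (S2 * mp_inv P1 * S1)) = mp_inv P2 * S2 * mp_inv P1 * S1"
    by (rule eq_matI) (use carriers in \<open>auto simp: mat_algebra_dims\<close>)
  thus ?thesis unfolding block_iteration_mat_def using carriers by (simp add: mat_algebra_dims)
qed

lemma hat_cal_iteration_mat:
  "block_iteration_mat (mp_inv P2 * (R2 * mp_inv P1 * R1 - S2))
     (- (mp_inv P2 * (R2 * mp_inv P1 * S1))) =
   four_block_mat (mp_inv P2 * R2 * mp_inv P1 * R1 - mp_inv P2 * S2)
     (- (mp_inv P2 * R2 * mp_inv P1 * S1)) (1\<^sub>m n) (0\<^sub>m n n)"
  unfolding block_iteration_mat_def using carriers by (simp add: mat_algebra_dims)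

end

theorem theorem3p19:
  fixes A P1 R1 S1 P2 R2 S2 :: "real mat" and m n :: nat
  assumes "A \<in> carrier_mat m n" and "0 < m" and "0 < n"
    and "semi_monotone A"
    and "double_proper_weak_regular_splitting A P1 R1 S1"
    and "double_proper_regular_splitting A P2 R2 S2"
    and "mat_kernel S2 = mat_kernel P2" and "mat_range S2 = mat_range P2"
    and "1 \<notin> rspectrum (S2 * mp_inv P1)"
    and "-1 \<notin> rspectrum (R2 * mp_inv P1)"
    and "mat_nonneg (mp_inv ((1\<^sub>m m - S2 * mp_inv P1) * A))"
    and "mat_nonneg (mp_inv ((1\<^sub>m m + R2 * mp_inv P1) * A))"
    and "mat_ge (mp_inv P2 * (R2 * mp_inv P1 * R1 - S2))
                (mp_inv P2 * (R2 - S2 * mp_inv P1 * R1))"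
    and "mat_ge (mp_inv P2 * ((1\<^sub>m m + R2 * mp_inv P1) * A))
                (mp_inv P2 * ((1\<^sub>m m - S2 * mp_inv P1) * A))"
  shows "rspectral_radius
           (four_block_mat (mp_inv P2 * R2 * mp_inv P1 * R1 - mp_inv P2 * S2)
                           (- (mp_inv P2 * R2 * mp_inv P1 * S1))
                           (1\<^sub>m n) (0\<^sub>m n n))
         \<le> rspectral_radius
           (four_block_mat (mp_inv P2 * R2 - mp_inv P2 * S2 * mp_inv P1 * R1)
                           (mp_inv P2 * S2 * mp_inv P1 * S1)
                           (1\<^sub>m n) (0\<^sub>m n n))
       \<and> rspectral_radius
           (four_block_mat (mp_inv P2 * R2 - mp_inv P2 * S2 * mp_inv P1 * R1)
                           (mp_inv P2 * S2 * mp_inv P1 * S1)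
                           (1\<^sub>m n) (0\<^sub>m n n)) < 1"
proof -
  interpret double_splitting_pair A P1 R1 S1 P2 R2 S2 m n
    using assms(1,3,5-8) by unfold_locales
  let ?W = "block_iteration_mat (mp_inv P2 * (R2 - S2 * mp_inv P1 * R1))
    (- (mp_inv P2 * - (S2 * mp_inv P1 * S1)))"
  let ?W' = "block_iteration_mat (mp_inv P2 * (R2 * mp_inv P1 * R1 - S2))
    (- (mp_inv P2 * (R2 * mp_inv P1 * S1)))"
  have "rspectral_radius ?W < 1" by (rule hat_iteration_convergent[OF assms(9,11)])
  moreover have "rspectral_radius ?W' < 1" by (rule hat_cal_iteration_convergent[OF assms(10,12)])
  hence "rspectral_radius ?W' \<le> rspectral_radius ?W"
    by (intro double_splitting_rspectral_radius_compare[OF _ _ _ _ _ n hat_splitting hat_cal_splitting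
        hat_signs hat_cal_signs assms(13,14)]) (use carriers in auto)
  ultimately show ?thesis unfolding hat_iteration_mat hat_cal_iteration_mat by simp
qed

end
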